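(* Let $(M,g)$ be a (CQR)$_n$ pseudo-Riemannian manifold and let $\Gamma_{pr}=C_{pqlm}C_r{}^{qlm}$, with trace $\Gamma^q{}_q=C_{jklm}C^{jklm}$. If $\Gamma^q{}_q\neq 0$ everywhere, then $T_{pq}=|\Gamma^s{}_s|^{-3/4}\,\Gamma_{pq}$ is a Codazzi tensor, i.e. $\nabla_iT_{jq}=\nabla_jT_{iq}$.
   Context: $(M,g)$ is a connected Hausdorff pseudo-Riemannian manifold of dimension $n\ge 3$ with Levi-Civita connection $\nabla$; indices raised/lowered with $g$, repeated indices summed. $R_{jklm}$ is the Riemann tensor, $R_{kl}=-R_{mkl}{}^m$, $R=R^m{}_m$, and the Weyl tensor is $$C_{jklm}=R_{jklm}+\tfrac{1}{n-2}\big(g_{mj}R_{kl}-g_{mk}R_{jl}+R_{mj}g_{kl}-R_{mk}g_{jl}\big)-\tfrac{R}{(n-1)(n-2)}\big(g_{mj}g_{kl}-g_{mk}g_{jl}\big).$$ (CQR)$_n$: $C_{jklm}\not\equiv 0$ and there is a non-zero vector field $A_i$ (fundamental vector) with $$\nabla_i C_{jklm}=2A_iC_{jklm}+A_jC_{iklm}+A_kC_{jilm}+A_lC_{jkim}+A_mC_{jkli}.$$ *)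

theory Defs
  imports "HOL-Analysis.Analysis"
begin

text \<open>Local coordinate model of a pseudo-Riemannian manifold: an open connected
set U of real^'n (a coordinate chart), with metric components g x i j.
All tensors are given by their components in these coordinates.\<close>

type_synonym 'n field = "real^'n \<Rightarrow> real"

definition pd :: "'n::finite \<Rightarrow> 'n field \<Rightarrow> 'n field" where
  "pd i f x = deriv (\<lambda>t. f (x + t *\<^sub>R axis i 1)) 0"

fun pds :: "'n::finite list \<Rightarrow> 'n field \<Rightarrow> 'n field" where
  "pds [] f = f"
| "pds (i # is) f = pd i (pds is f)"

definition smooth_on :: "(real^'n::finite) set \<Rightarrow> 'n field \<Rightarrow> bool" where
  "smooth_on U f \<longleftrightarrow> (\<forall>is. pds is f differentiable_on U)"

definition pseudo_riemannian_chart ::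
  "(real^'n::finite) set \<Rightarrow> (real^'n \<Rightarrow> 'n \<Rightarrow> 'n \<Rightarrow> real) \<Rightarrow> bool" where
  "pseudo_riemannian_chart U g \<longleftrightarrow> open U \<and> connected U \<and> U \<noteq> {} \<and>
     (\<forall>i j. smooth_on U (\<lambda>x. g x i j)) \<and>
     (\<forall>x\<in>U. \<forall>i j. g x i j = g x j i) \<and>
     (\<forall>x\<in>U. det (\<chi> i j. g x i j) \<noteq> 0)"

definition ginv :: "(real^'n::finite \<Rightarrow> 'n \<Rightarrow> 'n \<Rightarrow> real) \<Rightarrow> real^'n \<Rightarrow> 'n \<Rightarrow> 'n \<Rightarrow> real" where
  "ginv g x i j = matrix_inv (\<chi> a b. g x a b) $ i $ j"

definition christoffel :: "(real^'n::finite \<Rightarrow> 'n \<Rightarrow> 'n \<Rightarrow> real) \<Rightarrow> real^'n \<Rightarrow> 'n \<Rightarrow> 'n \<Rightarrow> 'n \<Rightarrow> real" where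
  "christoffel g x k i j = (1/2) * (\<Sum>l\<in>UNIV. ginv g x k l *
      (pd i (\<lambda>y. g y j l) x + pd j (\<lambda>y. g y i l) x - pd l (\<lambda>y. g y i j) x))"

text \<open>R^d_{cab} with R(d_a,d_b)d_c = R^d_{cab} d_d, R(X,Y) = [nabla_X,nabla_Y] - nabla_[X,Y].\<close>
definition riemann_up :: "(real^'n::finite \<Rightarrow> 'n \<Rightarrow> 'n \<Rightarrow> real) \<Rightarrow> real^'n \<Rightarrow> 'n \<Rightarrow> 'n \<Rightarrow> 'n \<Rightarrow> 'n \<Rightarrow> real" where
  "riemann_up g x d c a b =
     pd a (\<lambda>y. christoffel g y d b c) x - pd b (\<lambda>y. christoffel g y d a c) x
     + (\<Sum>e\<in>UNIV. christoffel g x d a e * christoffel g x e b c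
                  - christoffel g x d b e * christoffel g x e a c)"

text \<open>R_{jklm} = g_{je} R^e_{klm}; then the paper's Ricci tensor R_{kl} = - R_{mkl}^m
  (contraction of the first and last index) is the usual Ricci tensor R^a_{kal}.\<close>
definition riemann :: "(real^'n::finite \<Rightarrow> 'n \<Rightarrow> 'n \<Rightarrow> real) \<Rightarrow> real^'n \<Rightarrow> 'n \<Rightarrow> 'n \<Rightarrow> 'n \<Rightarrow> 'n \<Rightarrow> real" where
  "riemann g x j k l m = (\<Sum>e\<in>UNIV. g x j e * riemann_up g x e k l m)"

definition ricci :: "(real^'n::finite \<Rightarrow> 'n \<Rightarrow> 'n \<Rightarrow> real) \<Rightarrow> real^'n \<Rightarrow> 'n \<Rightarrow> 'n \<Rightarrow> real" where
  "ricci g x k l = - (\<Sum>m\<in>UNIV. \<Sum>j\<in>UNIV. ginv g x m j * riemann g x m k l j)"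

definition scalar_curv :: "(real^'n::finite \<Rightarrow> 'n \<Rightarrow> 'n \<Rightarrow> real) \<Rightarrow> real^'n \<Rightarrow> real" where
  "scalar_curv g x = (\<Sum>a\<in>UNIV. \<Sum>b\<in>UNIV. ginv g x a b * ricci g x a b)"

definition weyl :: "(real^'n::finite \<Rightarrow> 'n \<Rightarrow> 'n \<Rightarrow> real) \<Rightarrow> real^'n \<Rightarrow> 'n \<Rightarrow> 'n \<Rightarrow> 'n \<Rightarrow> 'n \<Rightarrow> real" where
  "weyl g x j k l m = (let n = real CARD('n) in
     riemann g x j k l m
     + (1 / (n - 2)) * (g x m j * ricci g x k l - g x m k * ricci g x j l
                        + ricci g x m j * g x k l - ricci g x m k * g x j l)
     - scalar_curv g x / ((n - 1) * (n - 2)) * (g x m j * g x k l - g x m k * g x j l))"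

definition cov4 :: "(real^'n::finite \<Rightarrow> 'n \<Rightarrow> 'n \<Rightarrow> real) \<Rightarrow>
    (real^'n \<Rightarrow> 'n \<Rightarrow> 'n \<Rightarrow> 'n \<Rightarrow> 'n \<Rightarrow> real) \<Rightarrow> real^'n \<Rightarrow> 'n \<Rightarrow> 'n \<Rightarrow> 'n \<Rightarrow> 'n \<Rightarrow> 'n \<Rightarrow> real" where
  "cov4 g T x i j k l m = pd i (\<lambda>y. T y j k l m) x
     - (\<Sum>e\<in>UNIV. christoffel g x e i j * T x e k l m + christoffel g x e i k * T x j e l m
                + christoffel g x e i l * T x j k e m + christoffel g x e i m * T x j k l e)"

definition cov2 :: "(real^'n::finite \<Rightarrow> 'n \<Rightarrow> 'n \<Rightarrow> real) \<Rightarrow>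
    (real^'n \<Rightarrow> 'n \<Rightarrow> 'n \<Rightarrow> real) \<Rightarrow> real^'n \<Rightarrow> 'n \<Rightarrow> 'n \<Rightarrow> 'n \<Rightarrow> real" where
  "cov2 g T x i j q = pd i (\<lambda>y. T y j q) x
     - (\<Sum>e\<in>UNIV. christoffel g x e i j * T x e q + christoffel g x e i q * T x j e)"

definition CQR :: "(real^'n::finite) set \<Rightarrow> (real^'n \<Rightarrow> 'n \<Rightarrow> 'n \<Rightarrow> real) \<Rightarrow> (real^'n \<Rightarrow> 'n \<Rightarrow> real) \<Rightarrow> bool" where
  "CQR U g A \<longleftrightarrow>
     (\<exists>x\<in>U. \<exists>j k l m. weyl g x j k l m \<noteq> 0) \<and>
     (\<forall>i. smooth_on U (\<lambda>x. A x i)) \<and>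
     (\<exists>x\<in>U. \<exists>i. A x i \<noteq> 0) \<and>
     (\<forall>x\<in>U. \<forall>i j k l m. cov4 g (weyl g) x i j k l m =
        2 * A x i * weyl g x j k l m + A x j * weyl g x i k l m + A x k * weyl g x j i l m
        + A x l * weyl g x j k i m + A x m * weyl g x j k l i)"

definition weyl_sq :: "(real^'n::finite \<Rightarrow> 'n \<Rightarrow> 'n \<Rightarrow> real) \<Rightarrow> real^'n \<Rightarrow> 'n \<Rightarrow> 'n \<Rightarrow> real" where
  "weyl_sq g x p r = (\<Sum>q\<in>UNIV. \<Sum>l\<in>UNIV. \<Sum>m\<in>UNIV. \<Sum>a\<in>UNIV. \<Sum>b\<in>UNIV. \<Sum>c\<in>UNIV.
      weyl g x p q l m * ginv g x q a * ginv g x l b * ginv g x m c * weyl g x r a b c)"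

definition weyl_sq_trace :: "(real^'n::finite \<Rightarrow> 'n \<Rightarrow> 'n \<Rightarrow> real) \<Rightarrow> real^'n \<Rightarrow> real" where
  "weyl_sq_trace g x = (\<Sum>p\<in>UNIV. \<Sum>q\<in>UNIV. ginv g x p q * weyl_sq g x p q)"

end

(*
  A^c C_cklm vanishes: contracting the (CQR) identity over one pair of indices, the Weyl
  tensor being trace-free and the contraction commuting with the covariant derivative, gives
  a linear relation between the contractions of A with C in different slots, and the algebraic
  symmetries of C then leave only the zero solution.  Consequently, in the covariant derivative
  of C (x) C every A-term sitting on a contracted slot disappears, so
    nabla_i Gamma_pr = 4 A_i Gamma_pr + A_p Gamma_ir + A_r Gamma_pi   and
    nabla_i tr Gamma = 4 A_i tr Gamma.
  The weight |tr Gamma|^(-3/4) therefore has gradient -3 A_i |tr Gamma|^(-3/4), and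
    nabla_i T_jq = |tr Gamma|^(-3/4) (A_i Gamma_jq + A_j Gamma_iq + A_q Gamma_ji),
  which is symmetric in i and j because Gamma is.
*)

theory Submission
  imports Defs
begin

section \<open>Partial derivatives\<close>

lemma has_real_derivative_along_axis:
  fixes f :: "'n::finite field"
  assumes "(f has_derivative f') (at x)"
  shows "((\<lambda>t. f (x + t *\<^sub>R axis i 1)) has_real_derivative f' (axis i 1)) (at 0)"
proof -
  have line: "((\<lambda>t::real. x + t *\<^sub>R axis i 1) has_derivative (\<lambda>t. t *\<^sub>R axis i 1)) (at 0)"
    by (auto intro!: derivative_eq_intros)
  have "((f \<circ> (\<lambda>t::real. x + t *\<^sub>R axis i 1)) has_derivative (f' \<circ> (\<lambda>t. t *\<^sub>R axis i 1))) (at 0)"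
    by (rule diff_chain_at[OF line]) (use assms in simp)
  moreover have "f' \<circ> (\<lambda>t. t *\<^sub>R axis i 1) = (\<lambda>t. f' (axis i 1) * t)"
    using linear_scale[OF has_derivative_linear[OF assms]] by (auto simp: o_def mult.commute)
  ultimately show ?thesis by (simp add: has_field_derivative_def o_def)
qed

lemma pd_eqI:
  "((\<lambda>t. f (x + t *\<^sub>R axis i 1)) has_real_derivative D) (at 0) \<Longrightarrow> pd i f x = D"
  unfolding pd_def by (rule DERIV_imp_deriv)

lemma pd_eq_frechet: "(f has_derivative f') (at x) \<Longrightarrow> pd i f x = f' (axis i 1)"
  by (rule pd_eqI[OF has_real_derivative_along_axis])

lemma pd_has_real_derivative:
  fixes f :: "'n::finite field"
  assumes "f differentiable (at x)"
  shows "((\<lambda>t. f (x + t *\<^sub>R axis i 1)) has_real_derivative pd i f x) (at 0)"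
proof -
  obtain f' where f': "(f has_derivative f') (at x)"
    using assms by (auto simp: differentiable_def)
  show ?thesis
    using has_real_derivative_along_axis[OF f'] pd_eq_frechet[OF f'] by simp
qed

lemma pd_has_real_derivative_at:
  fixes f :: "'n::finite field"
  assumes "f differentiable (at (x + t\<^sub>0 *\<^sub>R axis i 1))"
  shows "((\<lambda>t. f (x + t *\<^sub>R axis i 1)) has_real_derivative pd i f (x + t\<^sub>0 *\<^sub>R axis i 1)) (at t\<^sub>0)"
proof -
  let ?y = "x + t\<^sub>0 *\<^sub>R axis i 1"
  have "((\<lambda>s. f (?y + s *\<^sub>R axis i 1)) has_real_derivative pd i f ?y) (at (t\<^sub>0 - t\<^sub>0))"
    using pd_has_real_derivative[OF assms] by simp
  hence "((\<lambda>t. f (?y + (t - t\<^sub>0) *\<^sub>R axis i 1)) has_real_derivative pd i f ?y) (at t\<^sub>0)"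
    using DERIV_shift[of "\<lambda>s. f (?y + s *\<^sub>R axis i 1)" _ t\<^sub>0 "- t\<^sub>0"] by simp
  moreover have "(\<lambda>t. f (?y + (t - t\<^sub>0) *\<^sub>R axis i 1)) = (\<lambda>t. f (x + t *\<^sub>R axis i 1))"
    by (rule ext) (simp add: algebra_simps)
  ultimately show ?thesis by simp
qed

lemma pd_const: "pd i (\<lambda>y. c) x = 0"
  by (intro pd_eqI) simp

lemma pd_add:
  "f differentiable (at x) \<Longrightarrow> h differentiable (at x) \<Longrightarrow>
   pd i (\<lambda>y. f y + h y) x = pd i f x + pd i h x"
  by (intro pd_eqI DERIV_add pd_has_real_derivative)

lemma pd_diff:
  "f differentiable (at x) \<Longrightarrow> h differentiable (at x) \<Longrightarrow>
   pd i (\<lambda>y. f y - h y) x = pd i f x - pd i h x"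
  by (intro pd_eqI DERIV_diff pd_has_real_derivative)

lemma pd_mult_along_axis:
  assumes "((\<lambda>t. f (x + t *\<^sub>R axis i 1)) has_real_derivative D) (at 0)" "h differentiable (at x)"
  shows "pd i (\<lambda>y. f y * h y) x = D * h x + f x * pd i h x"
  using DERIV_mult[OF assms(1) pd_has_real_derivative[OF assms(2)]]
  by (intro pd_eqI) (simp add: algebra_simps)

lemma pd_mult:
  "f differentiable (at x) \<Longrightarrow> h differentiable (at x) \<Longrightarrow>
   pd i (\<lambda>y. f y * h y) x = pd i f x * h x + f x * pd i h x"
  by (intro pd_mult_along_axis pd_has_real_derivative)

lemma pd_cmult: "f differentiable (at x) \<Longrightarrow> pd i (\<lambda>y. c * f y) x = c * pd i f x"
  using pd_mult[of "\<lambda>y. c" x f i] by (simp add: pd_const)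

lemma pd_sum:
  assumes "finite A" "\<And>a. a \<in> A \<Longrightarrow> (\<lambda>y. f y a) differentiable (at x)"
  shows "pd i (\<lambda>y. \<Sum>a\<in>A. f y a) x = (\<Sum>a\<in>A. pd i (\<lambda>y. f y a) x)"
  using assms
proof (induction A rule: finite_induct)
  case empty
  show ?case by (simp add: pd_const)
next
  case (insert a A)
  have "(\<lambda>y. \<Sum>a\<in>A. f y a) differentiable (at x)"
    using insert by (intro differentiable_sum) auto
  thus ?case using insert by (simp add: pd_add)
qed

lemma pd_inverse:
  "f differentiable (at x) \<Longrightarrow> f x \<noteq> 0 \<Longrightarrow> pd i (\<lambda>y. 1 / f y) x = - pd i f x / (f x)\<^sup>2"
  using DERIV_inverse_fun[OF pd_has_real_derivative, of f x i]
  by (intro pd_eqI) (simp add: divide_inverse power2_eq_square)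

lemma pd_cong:
  assumes "open U" "x \<in> U" "\<And>y. y \<in> U \<Longrightarrow> f y = h y"
  shows "pd i f x = pd i h x"
proof -
  have "((\<lambda>t. x + t *\<^sub>R axis i 1) \<longlongrightarrow> x) (nhds 0)"
    by (auto intro!: tendsto_eq_intros filterlim_ident)
  hence "\<forall>\<^sub>F t in nhds 0. x + t *\<^sub>R axis i 1 \<in> U"
    using assms(1,2) by (rule topological_tendstoD)
  hence "\<forall>\<^sub>F t in nhds 0. f (x + t *\<^sub>R axis i 1) = h (x + t *\<^sub>R axis i 1)"
    by eventually_elim (use assms(3) in auto)
  thus ?thesis unfolding pd_def by (rule deriv_cong_ev) simp
qed

lemma pd_zero_on: "open U \<Longrightarrow> x \<in> U \<Longrightarrow> (\<And>y. y \<in> U \<Longrightarrow> f y = 0) \<Longrightarrow> pd i f x = 0"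
  using pd_cong[of U x f "\<lambda>y. 0" i] pd_const by simp

lemma pds_snoc: "pds (is @ [i]) f = pds is (pd i f)"
  by (induction "is") auto

lemma pds_cong:
  assumes "open U" "\<And>y. y \<in> U \<Longrightarrow> f y = h y" "x \<in> U"
  shows "pds is f x = pds is h x"
  using assms(3)
proof (induction "is" arbitrary: x)
  case Nil
  thus ?case using assms(2) by simp
next
  case (Cons i "is")
  thus ?case using pd_cong[OF assms(1) Cons(2), of "pds is f" "pds is h"] by simp
qed

definition Ck_on :: "(real^'n::finite) set \<Rightarrow> nat \<Rightarrow> 'n field \<Rightarrow> bool" where
  "Ck_on U k f \<longleftrightarrow> (\<forall>is. length is \<le> k \<longrightarrow> pds is f differentiable_on U)"

lemma smooth_on_iff_Ck_on: "smooth_on U f \<longleftrightarrow> (\<forall>k. Ck_on U k f)"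
  by (auto simp: smooth_on_def Ck_on_def)

lemma Ck_on_0: "Ck_on U 0 f \<longleftrightarrow> f differentiable_on U"
  by (auto simp: Ck_on_def)

lemma Ck_on_Suc: "Ck_on U (Suc k) f \<longleftrightarrow> f differentiable_on U \<and> (\<forall>i. Ck_on U k (pd i f))"
proof safe
  assume "Ck_on U (Suc k) f"
  thus "f differentiable_on U" by (auto simp: Ck_on_def dest: spec[of _ "[]"])
next
  fix i assume "Ck_on U (Suc k) f"
  thus "Ck_on U k (pd i f)"
    unfolding Ck_on_def by (metis pds_snoc length_append_singleton Suc_le_mono)
next
  assume f: "f differentiable_on U" "\<forall>i. Ck_on U k (pd i f)"
  show "Ck_on U (Suc k) f" unfolding Ck_on_def
  proof (intro allI impI)
    fix "is" :: "'a list" assume "length is \<le> Suc k"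
    thus "pds is f differentiable_on U"
      using f by (cases "is" rule: rev_exhaust) (auto simp: pds_snoc Ck_on_def)
  qed
qed

lemma Ck_on_SucD: "Ck_on U (Suc k) f \<Longrightarrow> Ck_on U k f"
  by (auto simp: Ck_on_def)

lemma Ck_on_cong:
  assumes "open U" "\<And>y. y \<in> U \<Longrightarrow> f y = h y" "Ck_on U k f"
  shows "Ck_on U k h"
  unfolding Ck_on_def
proof (intro allI impI)
  fix "is" :: "'a list" assume "length is \<le> k"
  hence "pds is f differentiable_on U" using assms(3) by (auto simp: Ck_on_def)
  show "pds is h differentiable_on U"
    unfolding differentiable_on_eq_differentiable_at[OF assms(1)]
  proof
    fix y assume y: "y \<in> U"
    then obtain D where "(pds is f has_derivative D) (at y)"
      using \<open>pds is f differentiable_on U\<close> assms(1)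
      by (auto simp: differentiable_on_eq_differentiable_at differentiable_def)
    hence "(pds is h has_derivative D) (at y)"
      by (rule has_derivative_transform_within_open[OF _ assms(1) y]) (use pds_cong[OF assms(1,2)] in auto)
    thus "pds is h differentiable (at y)" by (auto simp: differentiable_def)
  qed
qed

lemma Ck_on_const: "Ck_on U k (\<lambda>y. c)"
proof (induction k arbitrary: c)
  case 0
  show ?case by (simp add: Ck_on_0)
next
  case (Suc k)
  have pd_c: "pd i (\<lambda>y. c) = (\<lambda>y. 0)" for i by (rule ext) (rule pd_const)
  show ?case unfolding Ck_on_Suc pd_c using Suc by simp
qed

lemma Ck_on_add:
  assumes "open U"
  shows "Ck_on U k f \<Longrightarrow> Ck_on U k h \<Longrightarrow> Ck_on U k (\<lambda>y. f y + h y)"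
proof (induction k arbitrary: f h)
  case 0
  thus ?case by (simp add: Ck_on_0)
next
  case (Suc k)
  show ?case unfolding Ck_on_Suc
  proof (intro conjI allI)
    show "(\<lambda>y. f y + h y) differentiable_on U" using Suc by (simp add: Ck_on_Suc)
    fix i
    have "Ck_on U k (\<lambda>y. pd i f y + pd i h y)" using Suc by (simp add: Ck_on_Suc)
    moreover have "pd i f y + pd i h y = pd i (\<lambda>y. f y + h y) y" if "y \<in> U" for y
      using Suc.prems that assms
      by (intro pd_add[symmetric]) (auto simp: Ck_on_Suc differentiable_on_eq_differentiable_at)
    ultimately show "Ck_on U k (pd i (\<lambda>y. f y + h y))" by (rule Ck_on_cong[OF assms, rotated])
  qed
qed

lemma Ck_on_mult:
  assumes "open U"
  shows "Ck_on U k f \<Longrightarrow> Ck_on U k h \<Longrightarrow> Ck_on U k (\<lambda>y. f y * h y)"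
proof (induction k arbitrary: f h)
  case 0
  thus ?case by (simp add: Ck_on_0)
next
  case (Suc k)
  show ?case unfolding Ck_on_Suc
  proof (intro conjI allI)
    show "(\<lambda>y. f y * h y) differentiable_on U" using Suc by (simp add: Ck_on_Suc)
    fix i
    have "Ck_on U k (\<lambda>y. pd i f y * h y + f y * pd i h y)"
      using Suc Ck_on_SucD[of U k f] Ck_on_SucD[of U k h]
      by (intro Ck_on_add[OF assms]) (auto simp: Ck_on_Suc)
    moreover have "pd i f y * h y + f y * pd i h y = pd i (\<lambda>y. f y * h y) y" if "y \<in> U" for y
      using Suc.prems that assms
      by (intro pd_mult[symmetric]) (auto simp: Ck_on_Suc differentiable_on_eq_differentiable_at)
    ultimately show "Ck_on U k (pd i (\<lambda>y. f y * h y))" by (rule Ck_on_cong[OF assms, rotated])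
  qed
qed

lemma Ck_on_inverse:
  assumes "open U"
  shows "Ck_on U k f \<Longrightarrow> (\<And>y. y \<in> U \<Longrightarrow> f y \<noteq> 0) \<Longrightarrow> Ck_on U k (\<lambda>y. 1 / f y)"
proof (induction k arbitrary: f)
  case 0
  thus ?case by (simp add: Ck_on_0 divide_inverse)
next
  case (Suc k)
  show ?case unfolding Ck_on_Suc
  proof (intro conjI allI)
    show "(\<lambda>y. 1 / f y) differentiable_on U" using Suc by (simp add: Ck_on_Suc divide_inverse)
    fix i
    have "Ck_on U k (\<lambda>y. 1 / f y)" using Suc Ck_on_SucD by blast
    hence "Ck_on U k (\<lambda>y. (- 1 * pd i f y) * (1 / f y * (1 / f y)))"
      using Suc by (intro Ck_on_mult[OF assms] Ck_on_const) (auto simp: Ck_on_Suc)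
    moreover have "(- 1 * pd i f y) * (1 / f y * (1 / f y)) = pd i (\<lambda>y. 1 / f y) y" if "y \<in> U" for y
      using Suc.prems that assms
      by (subst pd_inverse) (auto simp: Ck_on_Suc power2_eq_square differentiable_on_eq_differentiable_at)
    ultimately show "Ck_on U k (pd i (\<lambda>y. 1 / f y))" by (rule Ck_on_cong[OF assms, rotated])
  qed
qed

lemma smooth_on_differentiable_on: "smooth_on U f \<Longrightarrow> f differentiable_on U"
  unfolding smooth_on_def by (metis pds.simps(1))

lemma smooth_on_differentiable: "open U \<Longrightarrow> smooth_on U f \<Longrightarrow> y \<in> U \<Longrightarrow> f differentiable (at y)"
  using smooth_on_differentiable_on differentiable_on_eq_differentiable_at by blast

lemma smooth_on_cong:
  "open U \<Longrightarrow> (\<And>y. y \<in> U \<Longrightarrow> f y = h y) \<Longrightarrow> smooth_on U f \<Longrightarrow> smooth_on U h"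
  unfolding smooth_on_iff_Ck_on using Ck_on_cong by blast

lemma smooth_on_const [intro]: "smooth_on U (\<lambda>y. c)"
  unfolding smooth_on_iff_Ck_on using Ck_on_const by blast

lemma smooth_on_add [intro]:
  "open U \<Longrightarrow> smooth_on U f \<Longrightarrow> smooth_on U h \<Longrightarrow> smooth_on U (\<lambda>y. f y + h y)"
  unfolding smooth_on_iff_Ck_on using Ck_on_add by blast

lemma smooth_on_mult [intro]:
  "open U \<Longrightarrow> smooth_on U f \<Longrightarrow> smooth_on U h \<Longrightarrow> smooth_on U (\<lambda>y. f y * h y)"
  unfolding smooth_on_iff_Ck_on using Ck_on_mult by blast

lemma smooth_on_divide:
  "open U \<Longrightarrow> smooth_on U h \<Longrightarrow> smooth_on U f \<Longrightarrow> (\<And>y. y \<in> U \<Longrightarrow> f y \<noteq> 0) \<Longrightarrow>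
   smooth_on U (\<lambda>y. h y / f y)"
  using smooth_on_mult[of U h "\<lambda>y. 1 / f y"] Ck_on_inverse[of U _ f]
  by (simp add: smooth_on_iff_Ck_on)

lemma smooth_on_divide_const: "open U \<Longrightarrow> smooth_on U f \<Longrightarrow> smooth_on U (\<lambda>y. f y / c)"
  using smooth_on_mult[of U f "\<lambda>y. 1 / c"] smooth_on_const[of U "1 / c"] by simp

lemma smooth_on_minus [intro]: "open U \<Longrightarrow> smooth_on U f \<Longrightarrow> smooth_on U (\<lambda>y. - f y)"
  using smooth_on_mult[of U "\<lambda>y. -1" f] by auto

lemma smooth_on_diff [intro]:
  "open U \<Longrightarrow> smooth_on U f \<Longrightarrow> smooth_on U h \<Longrightarrow> smooth_on U (\<lambda>y. f y - h y)"
  using smooth_on_add[of U f "\<lambda>y. - h y"] by auto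

lemma smooth_on_pd [intro]: "smooth_on U f \<Longrightarrow> smooth_on U (pd i f)"
  unfolding smooth_on_def by (metis pds_snoc)

lemma smooth_on_if [intro]:
  "smooth_on U f \<Longrightarrow> smooth_on U h \<Longrightarrow> smooth_on U (\<lambda>y. if P then f y else h y)"
  by (cases P) auto

lemma smooth_on_sum [intro]:
  assumes "open U" "finite A" "\<And>a. a \<in> A \<Longrightarrow> smooth_on U (\<lambda>y. f y a)"
  shows "smooth_on U (\<lambda>y. \<Sum>a\<in>A. f y a)"
  using assms(2,3) by (induction A rule: finite_induct) (auto intro: smooth_on_add[OF assms(1)])

lemma smooth_on_prod [intro]:
  assumes "open U" "finite A" "\<And>a. a \<in> A \<Longrightarrow> smooth_on U (\<lambda>y. f y a)"
  shows "smooth_on U (\<lambda>y. \<Prod>a\<in>A. f y a)"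
  using assms(2,3) by (induction A rule: finite_induct) (auto intro: smooth_on_mult[OF assms(1)])

lemma smooth_on_det:
  "open U \<Longrightarrow> (\<And>a c. smooth_on U (\<lambda>y. M y a c)) \<Longrightarrow>
   smooth_on U (\<lambda>y. det (\<chi> a c. M y a c :: real^'n::finite^'n))"
  unfolding det_def by (auto intro!: smooth_on_sum smooth_on_mult smooth_on_prod simp: finite_permutations)

section \<open>Symmetry of second partial derivatives\<close>

lemma second_difference_mean_value:
  fixes f :: "'n::finite field" and a b :: 'n
  defines "e\<^sub>a \<equiv> axis a 1 :: real^'n" and "e\<^sub>b \<equiv> axis b 1 :: real^'n"
  assumes h: "h > 0"
    and diff: "\<And>t. 0 \<le> t \<Longrightarrow> t \<le> h \<Longrightarrow>
      f differentiable (at (x + t *\<^sub>R e\<^sub>a)) \<and> f differentiable (at (x + t *\<^sub>R e\<^sub>a + h *\<^sub>R e\<^sub>b))"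
  obtains \<theta> where "0 < \<theta>" "\<theta> < h"
    "f (x + h *\<^sub>R e\<^sub>a + h *\<^sub>R e\<^sub>b) - f (x + h *\<^sub>R e\<^sub>a) - f (x + h *\<^sub>R e\<^sub>b) + f x
       = h * (pd a f (x + \<theta> *\<^sub>R e\<^sub>a + h *\<^sub>R e\<^sub>b) - pd a f (x + \<theta> *\<^sub>R e\<^sub>a))"
proof -
  define \<phi> where "\<phi> t = f ((x + h *\<^sub>R e\<^sub>b) + t *\<^sub>R e\<^sub>a) - f (x + t *\<^sub>R e\<^sub>a)" for t
  have d\<phi>: "(\<phi> has_real_derivative pd a f (x + t *\<^sub>R e\<^sub>a + h *\<^sub>R e\<^sub>b) - pd a f (x + t *\<^sub>R e\<^sub>a)) (at t)"
    if "0 \<le> t" "t \<le> h" for t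
  proof -
    have p: "x + h *\<^sub>R e\<^sub>b + t *\<^sub>R e\<^sub>a = x + t *\<^sub>R e\<^sub>a + h *\<^sub>R e\<^sub>b" by (simp add: algebra_simps)
    have "((\<lambda>t. f ((x + h *\<^sub>R e\<^sub>b) + t *\<^sub>R e\<^sub>a)) has_real_derivative
            pd a f ((x + h *\<^sub>R e\<^sub>b) + t *\<^sub>R e\<^sub>a)) (at t)"
      unfolding e\<^sub>a_def by (rule pd_has_real_derivative_at) (use diff[OF that] in \<open>simp add: e\<^sub>a_def algebra_simps\<close>)
    moreover have "((\<lambda>t. f (x + t *\<^sub>R e\<^sub>a)) has_real_derivative pd a f (x + t *\<^sub>R e\<^sub>a)) (at t)"
      unfolding e\<^sub>a_def by (rule pd_has_real_derivative_at) (use diff[OF that] in \<open>simp add: e\<^sub>a_def\<close>)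
    ultimately show ?thesis
      unfolding \<phi>_def[abs_def] p by (rule DERIV_diff)
  qed
  have "\<exists>l \<theta>. 0 < \<theta> \<and> \<theta> < h \<and> DERIV \<phi> \<theta> :> l \<and> \<phi> h - \<phi> 0 = (h - 0) * l"
  proof (rule MVT[OF h])
    show "continuous_on {0..h} \<phi>"
      using d\<phi> by (intro continuous_at_imp_continuous_on ballI DERIV_continuous) auto
    show "\<And>t. 0 < t \<Longrightarrow> t < h \<Longrightarrow> \<phi> differentiable (at t)"
      using d\<phi> by (meson less_imp_le real_differentiable_def)
  qed
  then obtain l \<theta> where \<theta>: "0 < \<theta>" "\<theta> < h" "DERIV \<phi> \<theta> :> l" "\<phi> h - \<phi> 0 = h * l"
    by auto
  have "l = pd a f (x + \<theta> *\<^sub>R e\<^sub>a + h *\<^sub>R e\<^sub>b) - pd a f (x + \<theta> *\<^sub>R e\<^sub>a)"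
    using DERIV_unique[OF \<theta>(3) d\<phi>] \<theta> by simp
  with \<theta> show ?thesis
    by (intro that[of \<theta>]) (auto simp: \<phi>_def algebra_simps)
qed

lemma difference_quotient_near_point:
  fixes D :: "'n::finite field"
  assumes L: "(D has_derivative L) (at x)"
    and d: "\<And>y. norm (y - x) < d \<Longrightarrow> norm (D y - D x - L (y - x)) \<le> \<epsilon>/4 * norm (y - x)"
    and \<theta>: "0 < \<theta>" "\<theta> < h" and h: "2 * h < d" and \<epsilon>: "\<epsilon> > 0"
  shows "\<bar>(D (x + \<theta> *\<^sub>R axis a 1 + h *\<^sub>R axis b 1) - D (x + \<theta> *\<^sub>R axis a 1)) / h - pd b D x\<bar> < \<epsilon>"
proof -
  define v\<^sub>1 v\<^sub>2 :: "real^'n" where "v\<^sub>1 = \<theta> *\<^sub>R axis a 1 + h *\<^sub>R axis b 1" and "v\<^sub>2 = \<theta> *\<^sub>R axis a 1"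
  have v\<^sub>1: "norm v\<^sub>1 \<le> \<theta> + h" and v\<^sub>2: "norm v\<^sub>2 = \<theta>"
    using norm_triangle_ineq[of "\<theta> *\<^sub>R axis a 1 :: real^'n" "h *\<^sub>R axis b 1"] \<theta> by (auto simp: v\<^sub>1_def v\<^sub>2_def)
  have Lv: "L v\<^sub>1 - L v\<^sub>2 = h * pd b D x"
    using linear_add[OF has_derivative_linear[OF L]] linear_scale[OF has_derivative_linear[OF L]]
    by (simp add: v\<^sub>1_def v\<^sub>2_def pd_eq_frechet[OF L])
  have "\<bar>D (x + v\<^sub>1) - D x - L v\<^sub>1\<bar> \<le> \<epsilon>/4 * norm v\<^sub>1"
    using d[of "x + v\<^sub>1"] v\<^sub>1 \<theta> h by simp
  also have "\<dots> \<le> \<epsilon>/4 * (\<theta> + h)" using v\<^sub>1 \<epsilon> by (intro mult_left_mono) auto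
  finally have "\<bar>D (x + v\<^sub>1) - D x - L v\<^sub>1\<bar> \<le> \<epsilon>/4 * (\<theta> + h)" .
  moreover have "\<bar>D (x + v\<^sub>2) - D x - L v\<^sub>2\<bar> \<le> \<epsilon>/4 * \<theta>"
    using d[of "x + v\<^sub>2"] v\<^sub>2 \<theta> h by simp
  moreover have "(D (x + v\<^sub>1) - D (x + v\<^sub>2)) - h * pd b D x
      = (D (x + v\<^sub>1) - D x - L v\<^sub>1) - (D (x + v\<^sub>2) - D x - L v\<^sub>2)"
    unfolding Lv[symmetric] by simp
  ultimately have "\<bar>(D (x + v\<^sub>1) - D (x + v\<^sub>2)) - h * pd b D x\<bar> \<le> \<epsilon>/4 * (\<theta> + h) + \<epsilon>/4 * \<theta>"
    by linarith
  also have "\<dots> < \<epsilon> * h" using \<theta> \<epsilon> by (simp add: field_simps)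
  finally have "\<bar>(D (x + v\<^sub>1) - D (x + v\<^sub>2)) - h * pd b D x\<bar> / h < \<epsilon>"
    using \<theta> by (simp add: pos_divide_less_eq)
  moreover have "(D (x + v\<^sub>1) - D (x + v\<^sub>2)) / h - pd b D x = ((D (x + v\<^sub>1) - D (x + v\<^sub>2)) - h * pd b D x) / h"
    using \<theta> by (simp add: diff_divide_distrib)
  ultimately show ?thesis
    using \<theta> by (simp add: abs_divide v\<^sub>1_def v\<^sub>2_def add.assoc)
qed

lemma second_difference_tendsto:
  fixes f :: "'n::finite field"
  assumes U: "open U" "x \<in> U" and f: "f differentiable_on U" and D: "pd a f differentiable (at x)"
  shows "((\<lambda>h. (f (x + h *\<^sub>R axis a 1 + h *\<^sub>R axis b 1) - f (x + h *\<^sub>R axis a 1)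
              - f (x + h *\<^sub>R axis b 1) + f x) / h\<^sup>2) \<longlongrightarrow> pd b (pd a f) x) (at_right 0)"
  unfolding tendsto_iff
proof (intro allI impI)
  fix \<epsilon> :: real assume \<epsilon>: "\<epsilon> > 0"
  obtain r where r: "r > 0" "ball x r \<subseteq> U" using U open_contains_ball by blast
  obtain L where L: "(pd a f has_derivative L) (at x)" using D by (auto simp: differentiable_def)
  obtain d where d: "d > 0"
    "\<And>y. norm (y - x) < d \<Longrightarrow> norm (pd a f y - pd a f x - L (y - x)) \<le> \<epsilon>/4 * norm (y - x)"
    using L \<epsilon> unfolding has_derivative_at_alt by (metis divide_pos_pos zero_less_numeral)
  show "\<forall>\<^sub>F h in at_right 0. dist ((f (x + h *\<^sub>R axis a 1 + h *\<^sub>R axis b 1) - f (x + h *\<^sub>R axis a 1)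
              - f (x + h *\<^sub>R axis b 1) + f x) / h\<^sup>2) (pd b (pd a f) x) < \<epsilon>"
    unfolding eventually_at_right_field
  proof (intro exI[of _ "min d r / 2"] conjI allI impI)
    show "0 < min d r / 2" using d r by simp
    fix h :: real assume h: "0 < h" "h < min d r / 2"
    have near: "f differentiable (at (x + s *\<^sub>R axis a 1 + t *\<^sub>R axis b 1))"
      if "\<bar>s\<bar> \<le> h" "\<bar>t\<bar> \<le> h" for s t
    proof -
      have "dist x (x + v) = norm v" for v :: "real^'n" by (simp add: dist_norm)
      hence "dist x (x + s *\<^sub>R axis a 1 + t *\<^sub>R axis b 1) = norm (s *\<^sub>R axis a 1 + t *\<^sub>R axis b 1 :: real^'n)"
        by (simp add: add.assoc)
      also have "\<dots> \<le> \<bar>s\<bar> + \<bar>t\<bar>"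
        using norm_triangle_ineq[of "s *\<^sub>R axis a 1 :: real^'n" "t *\<^sub>R axis b 1"] by simp
      finally have "dist x (x + s *\<^sub>R axis a 1 + t *\<^sub>R axis b 1) < r" using that h by simp
      thus ?thesis using r f U(1) by (auto simp: differentiable_on_eq_differentiable_at)
    qed
    obtain \<theta> where \<theta>: "0 < \<theta>" "\<theta> < h"
      and mvt: "f (x + h *\<^sub>R axis a 1 + h *\<^sub>R axis b 1) - f (x + h *\<^sub>R axis a 1) - f (x + h *\<^sub>R axis b 1) + f x
        = h * (pd a f (x + \<theta> *\<^sub>R axis a 1 + h *\<^sub>R axis b 1) - pd a f (x + \<theta> *\<^sub>R axis a 1))"
    proof (rule second_difference_mean_value[OF h(1)])
      fix t assume "0 \<le> t" "t \<le> h"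
      thus "f differentiable at (x + t *\<^sub>R axis a 1) \<and> f differentiable at (x + t *\<^sub>R axis a 1 + h *\<^sub>R axis b 1)"
        using near[of t 0] near[of t h] h by simp
    qed
    have "2 * h < d" using h by simp
    from difference_quotient_near_point[OF L d(2) \<theta> this \<epsilon>]
    show "dist ((f (x + h *\<^sub>R axis a 1 + h *\<^sub>R axis b 1) - f (x + h *\<^sub>R axis a 1)
              - f (x + h *\<^sub>R axis b 1) + f x) / h\<^sup>2) (pd b (pd a f) x) < \<epsilon>"
      unfolding mvt dist_real_def using h by (simp add: power2_eq_square)
  qed
qed

lemma pd_commute:
  fixes f :: "'n::finite field"
  assumes "open U" "x \<in> U" "f differentiable_on U"
    and "pd a f differentiable (at x)" "pd b f differentiable (at x)"
  shows "pd a (pd b f) x = pd b (pd a f) x"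
proof -
  have "(\<lambda>h. (f (x + h *\<^sub>R axis b 1 + h *\<^sub>R axis a 1) - f (x + h *\<^sub>R axis b 1)
              - f (x + h *\<^sub>R axis a 1) + f x) / h\<^sup>2)
      = (\<lambda>h. (f (x + h *\<^sub>R axis a 1 + h *\<^sub>R axis b 1) - f (x + h *\<^sub>R axis a 1)
              - f (x + h *\<^sub>R axis b 1) + f x) / h\<^sup>2)"
    by (rule ext) (simp add: algebra_simps)
  with second_difference_tendsto[OF assms(1-3,5), of a]
  have "((\<lambda>h. (f (x + h *\<^sub>R axis a 1 + h *\<^sub>R axis b 1) - f (x + h *\<^sub>R axis a 1)
              - f (x + h *\<^sub>R axis b 1) + f x) / h\<^sup>2) \<longlongrightarrow> pd a (pd b f) x) (at_right 0)"
    by simp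
  from tendsto_unique[OF _ this second_difference_tendsto[OF assms(1-4), of b]] show ?thesis
    by simp
qed

section \<open>The inverse metric\<close>

lemma matrix_inv_mult:
  fixes M :: "real^'n::finite^'n"
  assumes "det M \<noteq> 0"
  shows matrix_inv_right: "M ** matrix_inv M = mat 1" and matrix_inv_left: "matrix_inv M ** M = mat 1"
proof -
  have "\<exists>M'. M ** M' = mat 1 \<and> M' ** M = mat 1"
    using assms invertible_det_nz unfolding invertible_def by blast
  from someI_ex[OF this] show "M ** matrix_inv M = mat 1" "matrix_inv M ** M = mat 1"
    unfolding matrix_inv_def by auto
qed

lemma matrix_inv_transpose_eq:
  fixes M :: "real^'n::finite^'n"
  assumes "det M \<noteq> 0" "transpose M = M"
  shows "transpose (matrix_inv M) = matrix_inv M"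
proof -
  let ?I = "matrix_inv M"
  have left: "transpose ?I ** M = mat 1"
    using arg_cong[OF matrix_inv_right[OF assms(1)], of transpose]
    by (simp add: matrix_transpose_mul assms(2))
  have "transpose ?I = (transpose ?I ** M) ** ?I"
    by (metis matrix_inv_right[OF assms(1)] matrix_mul_assoc matrix_mul_rid)
  thus ?thesis using left by simp
qed

lemma matrix_inv_cramer:
  fixes M :: "real^'n::finite^'n"
  assumes "det M \<noteq> 0"
  shows "matrix_inv M $ k $ j = det (\<chi> a c. if c = k then (if a = j then 1 else 0) else M $ a $ c) / det M"
proof -
  let ?b = "(\<chi> a. if a = j then 1 else 0) :: real^'n"
  let ?x = "(\<chi> k. matrix_inv M $ k $ j) :: real^'n"
  have "(M *v ?x) $ i = (M ** matrix_inv M) $ i $ j" for i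
    by (simp add: matrix_vector_mult_def matrix_matrix_mult_def)
  hence "M *v ?x = ?b"
    unfolding matrix_inv_right[OF assms] by (simp add: vec_eq_iff mat_def)
  hence "?x = (\<chi> k. det (\<chi> i c. if c = k then ?b $ i else M $ i $ c) / det M)"
    using cramer[OF assms] by blast
  thus ?thesis by (simp add: vec_eq_iff cong: if_cong)
qed

locale metric_chart =
  fixes U :: "(real^'n::finite) set" and g :: "real^'n \<Rightarrow> 'n \<Rightarrow> 'n \<Rightarrow> real"
  assumes chart: "pseudo_riemannian_chart U g"
begin

lemma open_U: "open U"
  and g_smooth: "smooth_on U (\<lambda>x. g x i j)"
  and g_sym: "y \<in> U \<Longrightarrow> g y i j = g y j i"
  and g_det: "y \<in> U \<Longrightarrow> det (\<chi> i j. g y i j) \<noteq> 0"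
  using chart unfolding pseudo_riemannian_chart_def by auto

lemma ginv_mult_left: "y \<in> U \<Longrightarrow> (\<Sum>l\<in>UNIV. ginv g y i l * g y l j) = (if i = j then 1 else 0)"
  using arg_cong[OF matrix_inv_left[OF g_det[of y]], of "\<lambda>M. M $ i $ j"]
  by (simp add: matrix_matrix_mult_def mat_def ginv_def)

lemma ginv_mult_right: "y \<in> U \<Longrightarrow> (\<Sum>l\<in>UNIV. g y i l * ginv g y l j) = (if i = j then 1 else 0)"
  using arg_cong[OF matrix_inv_right[OF g_det[of y]], of "\<lambda>M. M $ i $ j"]
  by (simp add: matrix_matrix_mult_def mat_def ginv_def)

lemma ginv_sym: "y \<in> U \<Longrightarrow> ginv g y i j = ginv g y j i"
proof -
  assume y: "y \<in> U"
  have "transpose (\<chi> a b. g y a b) = (\<chi> a b. g y a b)"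
    using g_sym[OF y] by (simp add: transpose_def vec_eq_iff)
  from arg_cong[OF matrix_inv_transpose_eq[OF g_det[OF y] this], of "\<lambda>M. M $ i $ j"]
  show ?thesis by (simp add: transpose_def ginv_def)
qed

lemma ginv_smooth: "smooth_on U (\<lambda>y. ginv g y k j)"
proof (rule smooth_on_cong[OF open_U])
  show "smooth_on U (\<lambda>y. det (\<chi> a c. if c = k then (if a = j then 1 else 0) else g y a c :: real^'n^'n)
        / det (\<chi> a c. g y a c :: real^'n^'n))"
    using g_det by (intro smooth_on_divide open_U smooth_on_det) (auto intro: g_smooth)
  fix y assume "y \<in> U"
  thus "det (\<chi> a c. if c = k then (if a = j then 1 else 0) else g y a c :: real^'n^'n)
        / det (\<chi> a c. g y a c :: real^'n^'n) = ginv g y k j"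
    using matrix_inv_cramer[OF g_det, of y k j] by (simp only: ginv_def vec_lambda_beta)
qed

lemma ginv_lower_left: "y \<in> U \<Longrightarrow> (\<Sum>a\<in>UNIV. \<Sum>b\<in>UNIV. ginv g y a b * g y m a * X b) = X m"
proof -
  assume y: "y \<in> U"
  have "(\<Sum>a\<in>UNIV. \<Sum>b\<in>UNIV. ginv g y a b * g y m a * X b)
      = (\<Sum>b\<in>UNIV. (\<Sum>a\<in>UNIV. g y m a * ginv g y a b) * X b)"
    by (subst sum.swap) (simp add: sum_distrib_left sum_distrib_right ac_simps)
  thus ?thesis using ginv_mult_right[OF y] by (simp add: of_bool_def[symmetric])
qed

lemma ginv_lower_right: "y \<in> U \<Longrightarrow> (\<Sum>a\<in>UNIV. \<Sum>b\<in>UNIV. ginv g y a b * X a * g y k b) = X k"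
proof -
  assume y: "y \<in> U"
  have "(\<Sum>a\<in>UNIV. \<Sum>b\<in>UNIV. ginv g y a b * X a * g y k b)
      = (\<Sum>a\<in>UNIV. X a * (\<Sum>b\<in>UNIV. ginv g y a b * g y b k))"
    using g_sym[OF y] by (simp add: sum_distrib_left ac_simps)
  thus ?thesis using ginv_mult_left[OF y] by (simp add: of_bool_def[symmetric])
qed

lemma ginv_trace_metric: "y \<in> U \<Longrightarrow> (\<Sum>a\<in>UNIV. \<Sum>b\<in>UNIV. ginv g y a b * g y a b) = real CARD('n)"
  using ginv_mult_left[of y] g_sym[of y] by simp

end

section \<open>Curvature in a chart\<close>

lemma weyl_trace_coefficients:
  fixes n s r \<gamma> :: real
  assumes "n \<noteq> 1" "n \<noteq> 2"
  shows "- r + 1 / (n - 2) * (\<gamma> * s - r + r * n - r) - s / ((n - 1) * (n - 2)) * (\<gamma> * n - \<gamma>) = 0"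
proof -
  have "n - 1 \<noteq> 0" "n - 2 \<noteq> 0" using assms by auto
  hence "s / ((n - 1) * (n - 2)) * (\<gamma> * n - \<gamma>) = \<gamma> * s / (n - 2)"
    by (simp add: divide_simps) (simp add: algebra_simps)
  moreover have "1 / (n - 2) * (\<gamma> * s - r + r * n - r) = \<gamma> * s / (n - 2) + r"
    using \<open>n - 2 \<noteq> 0\<close> by (simp add: divide_simps) (simp add: algebra_simps)
  ultimately show ?thesis by simp
qed

context metric_chart
begin

lemmas smooth_intros = smooth_on_add[OF open_U] smooth_on_diff[OF open_U]
  smooth_on_mult[OF open_U] smooth_on_minus[OF open_U] smooth_on_sum[OF open_U]
  smooth_on_const smooth_on_pd g_smooth ginv_smooth finite_class.finite_UNIV

lemma smooth_differentiable: "smooth_on U f \<Longrightarrow> y \<in> U \<Longrightarrow> f differentiable (at y)"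
  by (rule smooth_on_differentiable[OF open_U])

abbreviation dg :: "real^'n \<Rightarrow> 'n \<Rightarrow> 'n \<Rightarrow> 'n \<Rightarrow> real" where
  "dg y k i j \<equiv> pd k (\<lambda>y. g y i j) y"

abbreviation ddg :: "real^'n \<Rightarrow> 'n \<Rightarrow> 'n \<Rightarrow> 'n \<Rightarrow> 'n \<Rightarrow> real" where
  "ddg y a b c d \<equiv> pd a (\<lambda>y. pd b (\<lambda>y. g y c d) y) y"

definition christoffel_low :: "real^'n \<Rightarrow> 'n \<Rightarrow> 'n \<Rightarrow> 'n \<Rightarrow> real" where
  "christoffel_low y e a b = 1/2 * (dg y a b e + dg y b a e - dg y e a b)"

lemma dg_sym: "y \<in> U \<Longrightarrow> dg y k i j = dg y k j i"
  by (rule pd_cong[OF open_U]) (auto intro: g_sym)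

lemma ddg_sym_lower: "y \<in> U \<Longrightarrow> ddg y a b c d = ddg y a b d c"
  by (rule pd_cong[OF open_U]) (auto intro: dg_sym)

lemma ddg_sym_upper: "y \<in> U \<Longrightarrow> ddg y a b c d = ddg y b a c d"
  by (intro pd_commute[OF open_U _ smooth_on_differentiable_on] smooth_differentiable
      smooth_on_pd g_smooth)

lemma christoffel_low_sym: "y \<in> U \<Longrightarrow> christoffel_low y e a b = christoffel_low y e b a"
  using dg_sym[of y] by (simp add: christoffel_low_def algebra_simps)

lemma christoffel_eq_low: "christoffel g y k i j = (\<Sum>l\<in>UNIV. ginv g y k l * christoffel_low y l i j)"
  unfolding christoffel_def christoffel_low_def by (simp add: sum_distrib_left algebra_simps)

lemma lower_christoffel:
  "y \<in> U \<Longrightarrow> (\<Sum>e\<in>UNIV. g y a e * christoffel g y e i j) = christoffel_low y a i j"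
  using ginv_lower_left[of y a "\<lambda>l. christoffel_low y l i j"]
  by (simp add: christoffel_eq_low sum_distrib_left ac_simps)

lemma dg_eq_christoffel_low: "y \<in> U \<Longrightarrow> dg y k a b = christoffel_low y b k a + christoffel_low y a k b"
  unfolding christoffel_low_def using dg_sym[of y] by (simp add: algebra_simps)

lemma christoffel_smooth: "smooth_on U (\<lambda>y. christoffel g y k i j)"
  unfolding christoffel_def by (intro smooth_intros)

lemma pd_christoffel_low:
  assumes y: "y \<in> U"
  shows "pd l (\<lambda>z. christoffel_low z j m k) y = 1/2 * (ddg y l m k j + ddg y l k m j - ddg y l j m k)"
proof -
  have d: "(\<lambda>z. dg z a b c) differentiable (at y)" for a b c
    by (rule smooth_differentiable[OF _ y]) (intro smooth_intros)
  show ?thesis unfolding christoffel_low_def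
    by (subst pd_cmult, (intro derivative_intros d)+, subst pd_diff, (intro derivative_intros d)+,
        subst pd_add, (intro d)+, simp)
qed

lemma lower_pd_christoffel:
  assumes y: "y \<in> U"
  shows "(\<Sum>e\<in>UNIV. g y j e * pd l (\<lambda>z. christoffel g z e m k) y)
    = pd l (\<lambda>z. christoffel_low z j m k) y - (\<Sum>e\<in>UNIV. dg y l j e * christoffel g y e m k)"
proof -
  have d: "(\<lambda>z. g z j e) differentiable (at y)" "(\<lambda>z. christoffel g z e m k) differentiable (at y)" for e
    by (intro smooth_differentiable[OF _ y] smooth_intros christoffel_smooth)+
  have "pd l (\<lambda>z. christoffel_low z j m k) y
      = pd l (\<lambda>z. \<Sum>e\<in>UNIV. g z j e * christoffel g z e m k) y"
    by (rule pd_cong[OF open_U y]) (simp add: lower_christoffel)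
  also have "\<dots> = (\<Sum>e\<in>UNIV. dg y l j e * christoffel g y e m k + g y j e * pd l (\<lambda>z. christoffel g z e m k) y)"
    by (simp add: pd_sum pd_mult d differentiable_mult)
  finally show ?thesis by (simp add: sum.distrib)
qed

lemma lower_christoffel_product:
  "y \<in> U \<Longrightarrow> (\<Sum>e\<in>UNIV. g y j e * (\<Sum>a\<in>UNIV. christoffel g y e l a * christoffel g y a m k))
    = (\<Sum>a\<in>UNIV. christoffel_low y j l a * christoffel g y a m k)"
proof -
  assume y: "y \<in> U"
  have "(\<Sum>e\<in>UNIV. g y j e * (\<Sum>a\<in>UNIV. christoffel g y e l a * christoffel g y a m k))
      = (\<Sum>a\<in>UNIV. \<Sum>e\<in>UNIV. g y j e * christoffel g y e l a * christoffel g y a m k)"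
    by (subst sum.swap) (simp add: sum_distrib_left mult.assoc)
  also have "\<dots> = (\<Sum>a\<in>UNIV. christoffel_low y j l a * christoffel g y a m k)"
    by (simp add: lower_christoffel[OF y, symmetric] sum_distrib_right)
  finally show ?thesis .
qed

definition cometric :: "real^'n \<Rightarrow> ('n \<Rightarrow> real) \<Rightarrow> ('n \<Rightarrow> real) \<Rightarrow> real" where
  "cometric y X Y = (\<Sum>e\<in>UNIV. \<Sum>b\<in>UNIV. ginv g y e b * (X e * Y b))"

lemma cometric_sym: "y \<in> U \<Longrightarrow> cometric y X Y = cometric y Y X"
  unfolding cometric_def using ginv_sym[of y]
  by (subst sum.swap) (simp add: ac_simps)

lemma dg_christoffel:
  "y \<in> U \<Longrightarrow> (\<Sum>e\<in>UNIV. dg y l j e * christoffel g y e m k)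
     = cometric y (\<lambda>e. christoffel_low y e l j) (\<lambda>b. christoffel_low y b m k)
       + (\<Sum>a\<in>UNIV. christoffel_low y j l a * christoffel g y a m k)"
  by (simp add: dg_eq_christoffel_low sum.distrib algebra_simps cometric_def christoffel_eq_low
                sum_distrib_left)

lemma riemann_coordinate_formula:
  assumes y: "y \<in> U"
  shows "riemann g y j k l m =
    1/2 * (ddg y l k m j - ddg y l j m k - ddg y m k l j + ddg y m j l k)
    + cometric y (\<lambda>e. christoffel_low y e m j) (\<lambda>b. christoffel_low y b l k)
    - cometric y (\<lambda>e. christoffel_low y e l j) (\<lambda>b. christoffel_low y b m k)"
proof -
  have "riemann g y j k l m =
      (\<Sum>e\<in>UNIV. g y j e * pd l (\<lambda>z. christoffel g z e m k) y)
    - (\<Sum>e\<in>UNIV. g y j e * pd m (\<lambda>z. christoffel g z e l k) y)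
    + (\<Sum>e\<in>UNIV. g y j e * (\<Sum>a\<in>UNIV. christoffel g y e l a * christoffel g y a m k))
    - (\<Sum>e\<in>UNIV. g y j e * (\<Sum>a\<in>UNIV. christoffel g y e m a * christoffel g y a l k))"
    unfolding riemann_def riemann_up_def by (simp add: sum.distrib sum_subtractf algebra_simps)
  thus ?thesis
    unfolding lower_pd_christoffel[OF y] lower_christoffel_product[OF y] dg_christoffel[OF y]
      pd_christoffel_low[OF y]
    using ddg_sym_upper[OF y, of l m k j] by (simp add: algebra_simps)
qed

lemma riemann_antisym_last: "y \<in> U \<Longrightarrow> riemann g y j k l m = - riemann g y j k m l"
  unfolding riemann_coordinate_formula by (simp add: algebra_simps)

lemma riemann_antisym_first: "y \<in> U \<Longrightarrow> riemann g y j k l m = - riemann g y k j l m"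
  unfolding riemann_coordinate_formula
  by (simp add: algebra_simps cometric_sym[of y "\<lambda>e. christoffel_low y e m k"]
                cometric_sym[of y "\<lambda>e. christoffel_low y e l k"])

lemma riemann_pair_sym: "y \<in> U \<Longrightarrow> riemann g y j k l m = riemann g y l m j k"
proof -
  assume y: "y \<in> U"
  have ddg: "ddg y a b c d = ddg y b a d c" for a b c d
    using ddg_sym_upper[OF y, of a b c d] ddg_sym_lower[OF y, of b a c d] by simp
  have low: "(\<lambda>e. christoffel_low y e a b) = (\<lambda>e. christoffel_low y e b a)" for a b
    using christoffel_low_sym[OF y] by auto
  show ?thesis
    unfolding riemann_coordinate_formula[OF y] ddg[of j m] ddg[of j l] ddg[of k m] ddg[of k l]
      low[of k l] low[of j m] low[of j l] low[of k m]
    using cometric_sym[OF y, of "\<lambda>e. christoffel_low y e m j" "\<lambda>b. christoffel_low y b l k"]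
    by simp
qed

lemma riemann_first_bianchi:
  "y \<in> U \<Longrightarrow> riemann g y j k l m + riemann g y j l m k + riemann g y j m k l = 0"
proof -
  assume y: "y \<in> U"
  have low: "(\<lambda>e. christoffel_low y e a b) = (\<lambda>e. christoffel_low y e b a)" for a b
    using christoffel_low_sym[OF y] by auto
  show ?thesis
    unfolding riemann_coordinate_formula[OF y]
    using ddg_sym_lower[OF y, of k j m l] ddg_sym_lower[OF y, of l j k m] ddg_sym_lower[OF y, of m j l k]
      ddg_sym_upper[OF y, of k l m j] ddg_sym_upper[OF y, of l m k j] ddg_sym_upper[OF y, of m k l j]
      low[of k l] low[of l m] low[of m k]
    by (simp add: algebra_simps)
qed

lemma ricci_sym: "y \<in> U \<Longrightarrow> ricci g y k l = ricci g y l k"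
proof -
  assume y: "y \<in> U"
  have swap: "riemann g y m l k j = riemann g y j k l m" for m j
    using riemann_pair_sym[OF y, of m l k j] riemann_antisym_first[OF y, of k j m l]
      riemann_antisym_last[OF y, of j k m l] by simp
  have "ricci g y l k = - (\<Sum>m\<in>UNIV. \<Sum>j\<in>UNIV. ginv g y m j * riemann g y j k l m)"
    unfolding ricci_def swap ..
  also have "\<dots> = - (\<Sum>j\<in>UNIV. \<Sum>m\<in>UNIV. ginv g y j m * riemann g y j k l m)"
    using ginv_sym[OF y] by (subst sum.swap) simp
  finally show ?thesis unfolding ricci_def by simp
qed

definition ricci_coeff :: real where
  "ricci_coeff = 1 / (real CARD('n) - 2)"

definition scalar_coeff :: "real^'n \<Rightarrow> real" where
  "scalar_coeff y = scalar_curv g y / ((real CARD('n) - 1) * (real CARD('n) - 2))"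

lemma weyl_eq:
  "weyl g y j k l m = riemann g y j k l m
     + ricci_coeff * (g y m j * ricci g y k l - g y m k * ricci g y j l
                      + ricci g y m j * g y k l - ricci g y m k * g y j l)
     - scalar_coeff y * (g y m j * g y k l - g y m k * g y j l)"
  unfolding weyl_def Let_def ricci_coeff_def scalar_coeff_def by simp

lemma weyl_antisym_first: "y \<in> U \<Longrightarrow> weyl g y j k l m = - weyl g y k j l m"
  unfolding weyl_eq using riemann_antisym_first[of y j k l m] by (simp add: algebra_simps)

lemma weyl_antisym_last: "y \<in> U \<Longrightarrow> weyl g y j k l m = - weyl g y j k m l"
  unfolding weyl_eq using riemann_antisym_last[of y j k l m] g_sym[of y] ricci_sym[of y]
  by (simp add: algebra_simps)

lemma weyl_pair_sym: "y \<in> U \<Longrightarrow> weyl g y j k l m = weyl g y l m j k"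
  unfolding weyl_eq using riemann_pair_sym[of y j k l m] g_sym[of y] ricci_sym[of y]
  by (simp add: algebra_simps)

lemma weyl_first_bianchi: "y \<in> U \<Longrightarrow> weyl g y j k l m + weyl g y j l m k + weyl g y j m k l = 0"
  unfolding weyl_eq using riemann_first_bianchi[of y j k l m] g_sym[of y] ricci_sym[of y]
  by (simp add: algebra_simps)

lemma weyl_trace_free:
  assumes n: "CARD('n) \<ge> 3" and y: "y \<in> U"
  shows "(\<Sum>a\<in>UNIV. \<Sum>b\<in>UNIV. ginv g y a b * weyl g y k a b m) = 0"
proof -
  let ?G = "ginv g y" and ?Ric = "ricci g y"
  have riemann: "(\<Sum>a\<in>UNIV. \<Sum>b\<in>UNIV. ?G a b * riemann g y k a b m) = - ?Ric k m"
    unfolding ricci_def using riemann_antisym_first[OF y, of k _ _ m] riemann_antisym_last[OF y, of _ k _ m]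
    by simp
  have "(\<Sum>a\<in>UNIV. \<Sum>b\<in>UNIV. ?G a b * weyl g y k a b m) =
      (\<Sum>a\<in>UNIV. \<Sum>b\<in>UNIV. ?G a b * riemann g y k a b m)
      + ricci_coeff * (g y m k * (\<Sum>a\<in>UNIV. \<Sum>b\<in>UNIV. ?G a b * ?Ric a b)
          - (\<Sum>a\<in>UNIV. \<Sum>b\<in>UNIV. ?G a b * g y m a * ?Ric k b)
          + ?Ric m k * (\<Sum>a\<in>UNIV. \<Sum>b\<in>UNIV. ?G a b * g y a b)
          - (\<Sum>a\<in>UNIV. \<Sum>b\<in>UNIV. ?G a b * ?Ric m a * g y k b))
      - scalar_coeff y * (g y m k * (\<Sum>a\<in>UNIV. \<Sum>b\<in>UNIV. ?G a b * g y a b)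
          - (\<Sum>a\<in>UNIV. \<Sum>b\<in>UNIV. ?G a b * g y m a * g y k b))"
    unfolding weyl_eq
    by (simp add: sum.distrib sum_subtractf sum_distrib_left right_diff_distrib distrib_left ac_simps)
  also have "\<dots> = - ?Ric k m
      + ricci_coeff * (g y k m * scalar_curv g y - ?Ric k m + ?Ric k m * real CARD('n) - ?Ric k m)
      - scalar_coeff y * (g y k m * real CARD('n) - g y k m)"
    unfolding riemann scalar_curv_def[symmetric] ginv_lower_left[OF y] ginv_lower_right[OF y]
      ginv_trace_metric[OF y]
    using g_sym[OF y, of k m] ricci_sym[OF y, of k m] by simp
  also have "\<dots> = 0"
    using weyl_trace_coefficients[of "real CARD('n)"] n
    unfolding ricci_coeff_def scalar_coeff_def by (simp add: mult.assoc)
  finally show ?thesis .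
qed

lemma weyl_smooth: "smooth_on U (\<lambda>y. weyl g y j k l m)"
proof -
  have riemann: "smooth_on U (\<lambda>y. riemann g y j k l m)" for j k l m
    unfolding riemann_def riemann_up_def by (intro smooth_intros christoffel_smooth)
  have ricci: "smooth_on U (\<lambda>y. ricci g y k l)" for k l
    unfolding ricci_def by (intro smooth_intros riemann)
  have "smooth_on U (\<lambda>y. scalar_curv g y)"
    unfolding scalar_curv_def by (intro smooth_intros ricci)
  thus ?thesis
    unfolding weyl_eq ricci_coeff_def scalar_coeff_def
    by (intro smooth_intros riemann ricci smooth_on_divide_const[OF open_U])
qed

end

lemma contract_sum_commute:
  fixes G :: "'n::finite \<Rightarrow> 'n \<Rightarrow> real" and \<gamma> :: "'m::finite \<Rightarrow> real"
  shows "(\<Sum>u\<in>UNIV. \<Sum>v\<in>UNIV. G u v * (\<Sum>e\<in>UNIV. \<gamma> e * Y e u v))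
       = (\<Sum>e\<in>UNIV. \<gamma> e * (\<Sum>u\<in>UNIV. \<Sum>v\<in>UNIV. G u v * Y e u v))"
proof -
  have "(\<Sum>u\<in>UNIV. \<Sum>v\<in>UNIV. G u v * (\<Sum>e\<in>UNIV. \<gamma> e * Y e u v))
      = (\<Sum>u\<in>UNIV. \<Sum>e\<in>UNIV. \<Sum>v\<in>UNIV. \<gamma> e * (G u v * Y e u v))"
    by (simp add: sum_distrib_left ac_simps) (rule sum.cong[OF refl], rule sum.swap)
  also have "\<dots> = (\<Sum>e\<in>UNIV. \<gamma> e * (\<Sum>u\<in>UNIV. \<Sum>v\<in>UNIV. G u v * Y e u v))"
    by (subst sum.swap) (simp add: sum_distrib_left)
  finally show ?thesis .
qed

lemma sum_mult_factor:
  fixes w :: "'a \<Rightarrow> real"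
  shows sum_mult_factor_left: "(\<Sum>s\<in>S. w s * (c * F s)) = c * (\<Sum>s\<in>S. w s * F s)"
    and sum_mult_factor_right: "(\<Sum>s\<in>S. w s * (F s * c)) = (\<Sum>s\<in>S. w s * F s) * c"
  by (simp_all add: sum_distrib_left sum_distrib_right ac_simps)

lemma contract_cmult:
  fixes G :: "'n::finite \<Rightarrow> 'n \<Rightarrow> real"
  shows "(\<Sum>u\<in>UNIV. \<Sum>v\<in>UNIV. G u v * (c * Y u v)) = c * (\<Sum>u\<in>UNIV. \<Sum>v\<in>UNIV. G u v * Y u v)"
  by (simp add: sum_distrib_left ac_simps)

lemma contract_swap:
  fixes G :: "'n::finite \<Rightarrow> 'n \<Rightarrow> real"
  assumes "\<And>u v. G u v = G v u"
  shows "(\<Sum>u\<in>UNIV. \<Sum>v\<in>UNIV. G u v * F u v) = (\<Sum>u\<in>UNIV. \<Sum>v\<in>UNIV. G u v * F v u)"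
  using assms by (subst sum.swap) simp

lemma contract_reindex_first:
  fixes G \<Gamma> X :: "'n::finite \<Rightarrow> 'n \<Rightarrow> real"
  shows "(\<Sum>u\<in>UNIV. \<Sum>v\<in>UNIV. G u v * (\<Sum>e\<in>UNIV. \<Gamma> e u * X e v))
       = (\<Sum>u\<in>UNIV. \<Sum>v\<in>UNIV. (\<Sum>b\<in>UNIV. \<Gamma> u b * G b v) * X u v)"
proof -
  have "(\<Sum>u\<in>UNIV. \<Sum>v\<in>UNIV. G u v * (\<Sum>e\<in>UNIV. \<Gamma> e u * X e v))
      = (\<Sum>u\<in>UNIV. \<Sum>e\<in>UNIV. \<Sum>v\<in>UNIV. G u v * \<Gamma> e u * X e v)"
    by (simp add: sum_distrib_left ac_simps) (rule sum.cong[OF refl], rule sum.swap)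
  also have "\<dots> = (\<Sum>e\<in>UNIV. \<Sum>v\<in>UNIV. \<Sum>u\<in>UNIV. G u v * \<Gamma> e u * X e v)"
    by (subst sum.swap) (rule sum.cong[OF refl], rule sum.swap)
  finally show ?thesis by (simp add: sum_distrib_left sum_distrib_right ac_simps)
qed

lemma contract_reindex_second:
  fixes G \<Gamma> X :: "'n::finite \<Rightarrow> 'n \<Rightarrow> real"
  shows "(\<Sum>u\<in>UNIV. \<Sum>v\<in>UNIV. G u v * (\<Sum>e\<in>UNIV. \<Gamma> e v * X u e))
       = (\<Sum>u\<in>UNIV. \<Sum>v\<in>UNIV. (\<Sum>c\<in>UNIV. G u c * \<Gamma> v c) * X u v)"
proof -
  have "(\<Sum>u\<in>UNIV. \<Sum>v\<in>UNIV. G u v * (\<Sum>e\<in>UNIV. \<Gamma> e v * X u e))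
      = (\<Sum>u\<in>UNIV. \<Sum>e\<in>UNIV. \<Sum>v\<in>UNIV. G u v * \<Gamma> e v * X u e)"
    by (simp add: sum_distrib_left ac_simps) (rule sum.cong[OF refl], rule sum.swap)
  thus ?thesis by (simp add: sum_distrib_left sum_distrib_right ac_simps)
qed

context metric_chart
begin

lemma pd_ginv_mult_metric:
  assumes x: "x \<in> U"
  shows "(\<Sum>c\<in>UNIV. pd k (\<lambda>z. ginv g z a c) x * g x c b) = - (\<Sum>c\<in>UNIV. ginv g x a c * dg x k c b)"
proof -
  have d: "(\<lambda>z. ginv g z a c) differentiable (at x)" "(\<lambda>z. g z a c) differentiable (at x)" for a c
    by (intro smooth_differentiable[OF _ x] ginv_smooth g_smooth)+
  have "0 = pd k (\<lambda>z. \<Sum>c\<in>UNIV. ginv g z a c * g z c b) x"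
    using pd_cong[OF open_U x, of "\<lambda>z. \<Sum>c\<in>UNIV. ginv g z a c * g z c b" "\<lambda>z. of_bool (a = b)" k]
    by (simp add: ginv_mult_left pd_const)
  also have "\<dots> = (\<Sum>c\<in>UNIV. pd k (\<lambda>z. ginv g z a c) x * g x c b + ginv g x a c * dg x k c b)"
    by (simp add: pd_sum pd_mult d differentiable_mult)
  finally show ?thesis by (simp add: sum.distrib eq_neg_iff_add_eq_0)
qed

lemma pd_ginv:
  assumes x: "x \<in> U"
  shows "pd k (\<lambda>z. ginv g z a d) x =
    - (\<Sum>b\<in>UNIV. christoffel g x a k b * ginv g x b d) - (\<Sum>c\<in>UNIV. ginv g x a c * christoffel g x d k c)"
proof -
  let ?G = "ginv g x" and ?L = "christoffel_low x"
  have "pd k (\<lambda>z. ginv g z a d) x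
      = (\<Sum>c\<in>UNIV. pd k (\<lambda>z. ginv g z a c) x * (\<Sum>b\<in>UNIV. g x c b * ?G b d))"
    using ginv_mult_right[OF x] by (simp add: of_bool_def[symmetric])
  also have "\<dots> = (\<Sum>b\<in>UNIV. ?G b d * (\<Sum>c\<in>UNIV. pd k (\<lambda>z. ginv g z a c) x * g x c b))"
    unfolding sum_distrib_left by (subst sum.swap) (simp add: ac_simps)
  also have "\<dots> = - (\<Sum>b\<in>UNIV. ?G b d * (\<Sum>c\<in>UNIV. ?G a c * dg x k c b))"
    by (simp add: pd_ginv_mult_metric[OF x] sum_negf)
  also have "\<dots> = - (\<Sum>b\<in>UNIV. \<Sum>c\<in>UNIV. ?G b d * ?G a c * (?L b k c + ?L c k b))"
    by (simp add: dg_eq_christoffel_low[OF x] sum_distrib_left ac_simps)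
  also have "\<dots> = - (\<Sum>c\<in>UNIV. ?G a c * christoffel g x d k c)
                   - (\<Sum>b\<in>UNIV. christoffel g x a k b * ?G b d)"
    unfolding christoffel_eq_low using ginv_sym[OF x]
    by (simp add: distrib_left sum.distrib sum_distrib_left sum_distrib_right ac_simps)
       (subst sum.swap, simp add: ac_simps)
  finally show ?thesis by simp
qed

text \<open>Contraction with \<open>g\<^sup>u\<^sup>v\<close> commutes with covariant differentiation: the Christoffel
  terms of the two contracted slots cancel against the derivative of the inverse metric.\<close>

lemma pd_ginv_contract:
  assumes x: "x \<in> U"
    and dX: "\<And>u v. (\<lambda>z. X z u v) differentiable (at x)"
    and pX: "\<And>u v. pd i (\<lambda>z. X z u v) x = D u v + (\<Sum>e\<in>UNIV. christoffel g x e i u * X x e v)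
                     + (\<Sum>e\<in>UNIV. christoffel g x e i v * X x u e)"
  shows "pd i (\<lambda>z. \<Sum>u\<in>UNIV. \<Sum>v\<in>UNIV. ginv g z u v * X z u v) x
       = (\<Sum>u\<in>UNIV. \<Sum>v\<in>UNIV. ginv g x u v * D u v)"
proof -
  let ?G = "ginv g x" and ?\<Gamma> = "christoffel g x"
  have dG: "(\<lambda>z. ginv g z a c) differentiable (at x)" for a c
    by (rule smooth_differentiable[OF ginv_smooth x])
  have "pd i (\<lambda>z. \<Sum>u\<in>UNIV. \<Sum>v\<in>UNIV. ginv g z u v * X z u v) x
      = (\<Sum>u\<in>UNIV. \<Sum>v\<in>UNIV. pd i (\<lambda>z. ginv g z u v) x * X x u v + ?G u v * pd i (\<lambda>z. X z u v) x)"
    by (simp add: pd_sum pd_mult dG dX differentiable_mult differentiable_sum)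
  also have "\<dots> = (\<Sum>u\<in>UNIV. \<Sum>v\<in>UNIV. ?G u v * D u v)
     + ((\<Sum>u\<in>UNIV. \<Sum>v\<in>UNIV. ?G u v * (\<Sum>e\<in>UNIV. ?\<Gamma> e i u * X x e v))
        - (\<Sum>u\<in>UNIV. \<Sum>v\<in>UNIV. (\<Sum>b\<in>UNIV. ?\<Gamma> u i b * ?G b v) * X x u v))
     + ((\<Sum>u\<in>UNIV. \<Sum>v\<in>UNIV. ?G u v * (\<Sum>e\<in>UNIV. ?\<Gamma> e i v * X x u e))
        - (\<Sum>u\<in>UNIV. \<Sum>v\<in>UNIV. (\<Sum>c\<in>UNIV. ?G u c * ?\<Gamma> v i c) * X x u v))"
    unfolding pd_ginv[OF x] pX by (simp add: sum.distrib sum_subtractf algebra_simps)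
  also have "\<dots> = (\<Sum>u\<in>UNIV. \<Sum>v\<in>UNIV. ?G u v * D u v)"
    using contract_reindex_first[of ?G "\<lambda>e u. ?\<Gamma> e i u" "X x"]
      contract_reindex_second[of ?G "\<lambda>e v. ?\<Gamma> e i v" "X x"]
    by simp
  finally show ?thesis .
qed

end

section \<open>The square of the Weyl tensor\<close>

context metric_chart
begin

definition weyl_contr1 :: "real^'n \<Rightarrow> 'n \<Rightarrow> 'n \<Rightarrow> 'n \<Rightarrow> 'n \<Rightarrow> 'n \<Rightarrow> 'n \<Rightarrow> real" where
  "weyl_contr1 z p q l r a b =
     (\<Sum>m\<in>UNIV. \<Sum>c\<in>UNIV. ginv g z m c * (weyl g z p q l m * weyl g z r a b c))"

definition weyl_contr2 :: "real^'n \<Rightarrow> 'n \<Rightarrow> 'n \<Rightarrow> 'n \<Rightarrow> 'n \<Rightarrow> real" where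
  "weyl_contr2 z p q r a = (\<Sum>l\<in>UNIV. \<Sum>b\<in>UNIV. ginv g z l b * weyl_contr1 z p q l r a b)"

lemma weyl_sq_eq_contr2:
  "weyl_sq g z p r = (\<Sum>q\<in>UNIV. \<Sum>a\<in>UNIV. ginv g z q a * weyl_contr2 z p q r a)"
proof -
  have reorder: "(\<Sum>q\<in>UNIV. \<Sum>l\<in>UNIV. \<Sum>m\<in>UNIV. \<Sum>a\<in>UNIV. \<Sum>b\<in>UNIV. \<Sum>c\<in>UNIV. F q l m a b c)
    = (\<Sum>q\<in>UNIV. \<Sum>a\<in>UNIV. \<Sum>l\<in>UNIV. \<Sum>b\<in>UNIV. \<Sum>m\<in>UNIV. \<Sum>c\<in>UNIV. F q l m a b c)"
    for F :: "'n \<Rightarrow> 'n \<Rightarrow> 'n \<Rightarrow> 'n \<Rightarrow> 'n \<Rightarrow> 'n \<Rightarrow> real"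
    by (subst (2) sum.swap, subst (3) sum.swap, subst (5) sum.swap) (rule refl)
  show ?thesis
    unfolding weyl_sq_def weyl_contr2_def weyl_contr1_def
    by (subst reorder) (simp add: sum_distrib_left ac_simps)
qed

lemma weyl_contr1_smooth: "smooth_on U (\<lambda>z. weyl_contr1 z p q l r a b)"
  unfolding weyl_contr1_def by (intro smooth_intros weyl_smooth)

lemma weyl_contr2_smooth: "smooth_on U (\<lambda>z. weyl_contr2 z p q r a)"
  unfolding weyl_contr2_def by (intro smooth_intros weyl_contr1_smooth)

lemma weyl_sq_smooth: "smooth_on U (\<lambda>z. weyl_sq g z p r)"
  unfolding weyl_sq_eq_contr2 by (intro smooth_intros weyl_contr2_smooth)

lemma weyl_sq_trace_smooth: "smooth_on U (\<lambda>z. weyl_sq_trace g z)"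
  unfolding weyl_sq_trace_def by (intro smooth_intros weyl_sq_smooth)

lemma weyl_contr1_sym: "z \<in> U \<Longrightarrow> weyl_contr1 z p q l r a b = weyl_contr1 z r a b p q l"
  unfolding weyl_contr1_def using ginv_sym[of z] by (subst contract_swap) (auto simp: mult.commute)

lemma weyl_contr2_sym: "z \<in> U \<Longrightarrow> weyl_contr2 z p q r a = weyl_contr2 z r a p q"
  unfolding weyl_contr2_def using ginv_sym[of z] weyl_contr1_sym[of z] by (subst contract_swap) auto

lemma weyl_sq_sym: "z \<in> U \<Longrightarrow> weyl_sq g z p r = weyl_sq g z r p"
  unfolding weyl_sq_eq_contr2 using ginv_sym[of z] weyl_contr2_sym[of z] by (subst contract_swap) auto

end

locale cqr_chart = metric_chart U g for U :: "(real^'n::finite) set" and g +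
  fixes A :: "real^'n \<Rightarrow> 'n \<Rightarrow> real"
  assumes dim: "CARD('n) \<ge> 3"
    and cov_weyl: "\<And>x i j k l m. x \<in> U \<Longrightarrow> cov4 g (weyl g) x i j k l m =
        2 * A x i * weyl g x j k l m + A x j * weyl g x i k l m + A x k * weyl g x j i l m
        + A x l * weyl g x j k i m + A x m * weyl g x j k l i"
begin

definition A_up :: "real^'n \<Rightarrow> 'n \<Rightarrow> real" where
  "A_up x c = (\<Sum>q\<in>UNIV. ginv g x c q * A x q)"

lemma contract_A_first:
  "x \<in> U \<Longrightarrow> (\<Sum>u\<in>UNIV. \<Sum>v\<in>UNIV. ginv g x u v * (A x u * Y v)) = (\<Sum>c\<in>UNIV. A_up x c * Y c)"
  unfolding A_up_def sum_distrib_right using ginv_sym[of x]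
  by (subst sum.swap) (simp add: mult.assoc mult.left_commute)

lemma contract_A_second:
  "(\<Sum>u\<in>UNIV. \<Sum>v\<in>UNIV. ginv g x u v * (A x v * Y u)) = (\<Sum>c\<in>UNIV. A_up x c * Y c)"
  unfolding A_up_def sum_distrib_right by (simp add: mult.assoc)

lemma pd_weyl: "pd i (\<lambda>z. weyl g z j k l m) x = cov4 g (weyl g) x i j k l m
   + (\<Sum>e\<in>UNIV. christoffel g x e i j * weyl g x e k l m) + (\<Sum>e\<in>UNIV. christoffel g x e i k * weyl g x j e l m)
   + (\<Sum>e\<in>UNIV. christoffel g x e i l * weyl g x j k e m) + (\<Sum>e\<in>UNIV. christoffel g x e i m * weyl g x j k l e)"
  unfolding cov4_def by (simp add: sum.distrib)

lemma weyl_differentiable: "x \<in> U \<Longrightarrow> (\<lambda>z. weyl g z j k l m) differentiable (at x)"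
  by (rule smooth_differentiable[OF weyl_smooth])

lemma contract_cov_weyl:
  assumes x: "x \<in> U"
  shows "(\<Sum>u\<in>UNIV. \<Sum>v\<in>UNIV. ginv g x u v * cov4 g (weyl g) x j k u v m) = 0"
proof -
  let ?\<Gamma> = "christoffel g x" and ?C = "weyl g x"
  have "0 = pd j (\<lambda>z. \<Sum>u\<in>UNIV. \<Sum>v\<in>UNIV. ginv g z u v * weyl g z k u v m) x"
    by (rule pd_zero_on[OF open_U x, symmetric]) (rule weyl_trace_free[OF dim])
  also have "\<dots> = (\<Sum>u\<in>UNIV. \<Sum>v\<in>UNIV. ginv g x u v *
      (cov4 g (weyl g) x j k u v m + (\<Sum>e\<in>UNIV. ?\<Gamma> e j k * ?C e u v m) + (\<Sum>e\<in>UNIV. ?\<Gamma> e j m * ?C k u v e)))"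
    by (rule pd_ginv_contract[OF x weyl_differentiable[OF x]]) (simp add: pd_weyl)
  also have "\<dots> = (\<Sum>u\<in>UNIV. \<Sum>v\<in>UNIV. ginv g x u v * cov4 g (weyl g) x j k u v m)"
    by (simp add: distrib_left sum.distrib contract_sum_commute weyl_trace_free[OF dim x])
  finally show ?thesis by simp
qed

lemma A_up_weyl_relation:
  assumes x: "x \<in> U"
  shows "(\<Sum>c\<in>UNIV. A_up x c * weyl g x k j c m) + (\<Sum>c\<in>UNIV. A_up x c * weyl g x k c j m) = 0"
proof -
  let ?C = "weyl g x" and ?G = "ginv g x"
  have "0 = (\<Sum>u\<in>UNIV. \<Sum>v\<in>UNIV. ?G u v * (2 * A x j * ?C k u v m + A x k * ?C j u v m + A x m * ?C k u v j))
     + (\<Sum>u\<in>UNIV. \<Sum>v\<in>UNIV. ?G u v * (A x u * ?C k j v m))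
     + (\<Sum>u\<in>UNIV. \<Sum>v\<in>UNIV. ?G u v * (A x v * ?C k u j m))"
    using contract_cov_weyl[OF x, of j k m] unfolding cov_weyl[OF x]
    by (simp add: sum.distrib algebra_simps)
  also have "(\<Sum>u\<in>UNIV. \<Sum>v\<in>UNIV. ?G u v * (2 * A x j * ?C k u v m + A x k * ?C j u v m + A x m * ?C k u v j)) = 0"
    using weyl_trace_free[OF dim x] by (simp add: sum.distrib algebra_simps sum_distrib_left[symmetric])
  finally show ?thesis by (simp add: contract_A_first[OF x] contract_A_second)
qed

text \<open>\<open>Z\<^sub>k\<^sub>l\<^sub>m = A\<^sup>c C\<^sub>c\<^sub>k\<^sub>l\<^sub>m\<close> is antisymmetric in each pair of its indices, so the cyclic
  identity makes it equal to a third of itself.\<close>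

lemma A_up_weyl_zero:
  assumes x: "x \<in> U"
  shows "(\<Sum>c\<in>UNIV. A_up x c * weyl g x c k l m) = 0"
proof -
  define Z where "Z k l m = (\<Sum>c\<in>UNIV. A_up x c * weyl g x c k l m)" for k l m
  have swap: "Z m l k = - Z l m k" for l k m
  proof -
    have "(\<Sum>c\<in>UNIV. A_up x c * weyl g x l k c m) = Z m l k"
      unfolding Z_def using weyl_pair_sym[OF x, of l k _ m] by simp
    moreover have "(\<Sum>c\<in>UNIV. A_up x c * weyl g x l c k m) = Z l m k"
      unfolding Z_def using weyl_antisym_first[OF x, of l _ k m] weyl_antisym_last[OF x, of _ l k m]
      by simp
    ultimately show ?thesis using A_up_weyl_relation[OF x, of l k m] by simp
  qed
  have antisym_first: "Z k l m = - Z l k m" for k l m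
    using swap[where m = k and l = l and k = m] .
  have antisym_last: "Z k l m = - Z k m l" for k l m
    unfolding Z_def using weyl_antisym_last[OF x, of _ k l m] by (simp add: sum_negf[symmetric])
  have cyclic: "Z k l m + Z l m k + Z m k l = 0"
    unfolding Z_def using weyl_first_bianchi[OF x]
    by (simp add: sum.distrib[symmetric] distrib_left[symmetric])
  have "Z l m k = Z k l m" "Z m k l = Z k l m"
    using antisym_first antisym_last by (metis minus_minus)+
  with cyclic have "3 * Z k l m = 0" by simp
  thus ?thesis unfolding Z_def by simp
qed

lemma A_up_weyl_zero_slots:
  assumes x: "x \<in> U"
  shows "(\<Sum>c\<in>UNIV. A_up x c * weyl g x c k l m) = 0" "(\<Sum>c\<in>UNIV. A_up x c * weyl g x k c l m) = 0"
    "(\<Sum>c\<in>UNIV. A_up x c * weyl g x k l c m) = 0" "(\<Sum>c\<in>UNIV. A_up x c * weyl g x k l m c) = 0"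
  using A_up_weyl_zero[OF x, of k l m] A_up_weyl_zero[OF x, of m k l]
    weyl_antisym_first[OF x, of k _ l m] weyl_pair_sym[OF x, of k l _ m] weyl_antisym_last[OF x, of k l m]
  by (simp_all add: sum_negf)

lemma pd_contract_A_null:
  assumes x: "x \<in> U"
    and dX: "\<And>u v. (\<lambda>z. X z u v) differentiable (at x)"
    and pX: "\<And>u v. pd i (\<lambda>z. X z u v) x = D u v + A x u * Y v + A x v * Z u
                     + (\<Sum>e\<in>UNIV. christoffel g x e i u * X x e v)
                     + (\<Sum>e\<in>UNIV. christoffel g x e i v * X x u e)"
    and "(\<Sum>c\<in>UNIV. A_up x c * Y c) = 0" "(\<Sum>c\<in>UNIV. A_up x c * Z c) = 0"
  shows "pd i (\<lambda>z. \<Sum>u\<in>UNIV. \<Sum>v\<in>UNIV. ginv g z u v * X z u v) x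
       = (\<Sum>u\<in>UNIV. \<Sum>v\<in>UNIV. ginv g x u v * D u v)"
proof -
  have "pd i (\<lambda>z. \<Sum>u\<in>UNIV. \<Sum>v\<in>UNIV. ginv g z u v * X z u v) x
      = (\<Sum>u\<in>UNIV. \<Sum>v\<in>UNIV. ginv g x u v * (D u v + A x u * Y v + A x v * Z u))"
    by (rule pd_ginv_contract[OF x dX]) (simp add: pX)
  also have "\<dots> = (\<Sum>u\<in>UNIV. \<Sum>v\<in>UNIV. ginv g x u v * D u v)"
    using assms(4,5) by (simp add: distrib_left sum.distrib contract_A_first[OF x] contract_A_second)
  finally show ?thesis .
qed

lemma A_up_contr1_zero:
  assumes x: "x \<in> U"
  shows "(\<Sum>s\<in>UNIV. A_up x s * weyl_contr1 x s q l r a b) = 0"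
    "(\<Sum>s\<in>UNIV. A_up x s * weyl_contr1 x p s l r a b) = 0"
    "(\<Sum>s\<in>UNIV. A_up x s * weyl_contr1 x p q s r a b) = 0"
    "(\<Sum>s\<in>UNIV. A_up x s * weyl_contr1 x p q l s a b) = 0"
    "(\<Sum>s\<in>UNIV. A_up x s * weyl_contr1 x p q l r s b) = 0"
    "(\<Sum>s\<in>UNIV. A_up x s * weyl_contr1 x p q l r a s) = 0"
  unfolding weyl_contr1_def contract_sum_commute[symmetric]
  by (simp_all add: sum_mult_factor A_up_weyl_zero_slots[OF x])

lemma A_up_contr2_zero:
  assumes x: "x \<in> U"
  shows "(\<Sum>s\<in>UNIV. A_up x s * weyl_contr2 x s q r a) = 0"
    "(\<Sum>s\<in>UNIV. A_up x s * weyl_contr2 x p s r a) = 0"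
    "(\<Sum>s\<in>UNIV. A_up x s * weyl_contr2 x p q s a) = 0"
    "(\<Sum>s\<in>UNIV. A_up x s * weyl_contr2 x p q r s) = 0"
  unfolding weyl_contr2_def contract_sum_commute[symmetric] by (simp_all add: A_up_contr1_zero[OF x])

lemma A_up_weyl_sq_zero:
  assumes x: "x \<in> U"
  shows "(\<Sum>s\<in>UNIV. A_up x s * weyl_sq g x s r) = 0" "(\<Sum>s\<in>UNIV. A_up x s * weyl_sq g x p s) = 0"
  unfolding weyl_sq_eq_contr2 contract_sum_commute[symmetric] by (simp_all add: A_up_contr2_zero[OF x])

lemma pd_weyl_contr1:
  assumes x: "x \<in> U"
  shows "pd i (\<lambda>z. weyl_contr1 z p q l r a b) x =
    4 * A x i * weyl_contr1 x p q l r a b + A x p * weyl_contr1 x i q l r a b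
    + A x q * weyl_contr1 x p i l r a b + A x l * weyl_contr1 x p q i r a b
    + A x r * weyl_contr1 x p q l i a b + A x a * weyl_contr1 x p q l r i b
    + A x b * weyl_contr1 x p q l r a i
    + (\<Sum>e\<in>UNIV. christoffel g x e i p * weyl_contr1 x e q l r a b)
    + (\<Sum>e\<in>UNIV. christoffel g x e i q * weyl_contr1 x p e l r a b)
    + (\<Sum>e\<in>UNIV. christoffel g x e i l * weyl_contr1 x p q e r a b)
    + (\<Sum>e\<in>UNIV. christoffel g x e i r * weyl_contr1 x p q l e a b)
    + (\<Sum>e\<in>UNIV. christoffel g x e i a * weyl_contr1 x p q l r e b)
    + (\<Sum>e\<in>UNIV. christoffel g x e i b * weyl_contr1 x p q l r a e)"
    (is "_ = ?rhs")
proof -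
  let ?C = "weyl g x" and ?\<Gamma> = "christoffel g x"
  define K where "K m c = 4 * A x i * (?C p q l m * ?C r a b c) + A x p * (?C i q l m * ?C r a b c)
     + A x q * (?C p i l m * ?C r a b c) + A x l * (?C p q i m * ?C r a b c)
     + A x r * (?C p q l m * ?C i a b c) + A x a * (?C p q l m * ?C r i b c)
     + A x b * (?C p q l m * ?C r a i c)
     + (\<Sum>e\<in>UNIV. ?\<Gamma> e i p * (?C e q l m * ?C r a b c)) + (\<Sum>e\<in>UNIV. ?\<Gamma> e i q * (?C p e l m * ?C r a b c))
     + (\<Sum>e\<in>UNIV. ?\<Gamma> e i l * (?C p q e m * ?C r a b c)) + (\<Sum>e\<in>UNIV. ?\<Gamma> e i r * (?C p q l m * ?C e a b c))
     + (\<Sum>e\<in>UNIV. ?\<Gamma> e i a * (?C p q l m * ?C r e b c)) + (\<Sum>e\<in>UNIV. ?\<Gamma> e i b * (?C p q l m * ?C r a e c))"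
    for m c
  have "pd i (\<lambda>z. weyl_contr1 z p q l r a b) x = (\<Sum>m\<in>UNIV. \<Sum>c\<in>UNIV. ginv g x m c * K m c)"
    unfolding weyl_contr1_def
  proof (rule pd_contract_A_null[OF x, where Y = "\<lambda>c. ?C p q l i * ?C r a b c"
                                          and Z = "\<lambda>m. ?C p q l m * ?C r a b i"])
    fix m c
    show "(\<lambda>z. weyl g z p q l m * weyl g z r a b c) differentiable (at x)"
      by (intro differentiable_mult weyl_differentiable[OF x])
    show "pd i (\<lambda>z. weyl g z p q l m * weyl g z r a b c) x = K m c
       + A x m * (?C p q l i * ?C r a b c) + A x c * (?C p q l m * ?C r a b i)
       + (\<Sum>e\<in>UNIV. ?\<Gamma> e i m * (?C p q l e * ?C r a b c))
       + (\<Sum>e\<in>UNIV. ?\<Gamma> e i c * (?C p q l m * ?C r a b e))"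
      unfolding pd_mult[OF weyl_differentiable[OF x] weyl_differentiable[OF x]] pd_weyl cov_weyl[OF x] K_def
      by (simp add: sum_distrib_left sum_distrib_right algebra_simps)
  next
    show "(\<Sum>c\<in>UNIV. A_up x c * (?C p q l i * ?C r a b c)) = 0"
      using A_up_weyl_zero_slots(4)[OF x, of r a b] by (simp add: sum_mult_factor)
    show "(\<Sum>m\<in>UNIV. A_up x m * (?C p q l m * ?C r a b i)) = 0"
      using A_up_weyl_zero_slots(4)[OF x, of p q l] by (simp add: sum_mult_factor)
  qed
  also have "\<dots> = ?rhs"
    unfolding K_def distrib_left sum.distrib contract_cmult contract_sum_commute weyl_contr1_def ..
  finally show ?thesis .
qed

lemma pd_weyl_contr2:
  assumes x: "x \<in> U"
  shows "pd i (\<lambda>z. weyl_contr2 z p q r a) x =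
    4 * A x i * weyl_contr2 x p q r a + A x p * weyl_contr2 x i q r a + A x q * weyl_contr2 x p i r a
    + A x r * weyl_contr2 x p q i a + A x a * weyl_contr2 x p q r i
    + (\<Sum>e\<in>UNIV. christoffel g x e i p * weyl_contr2 x e q r a)
    + (\<Sum>e\<in>UNIV. christoffel g x e i q * weyl_contr2 x p e r a)
    + (\<Sum>e\<in>UNIV. christoffel g x e i r * weyl_contr2 x p q e a)
    + (\<Sum>e\<in>UNIV. christoffel g x e i a * weyl_contr2 x p q r e)"
    (is "_ = ?rhs")
proof -
  let ?N = "weyl_contr1 x" and ?\<Gamma> = "christoffel g x"
  define K where "K l b = 4 * A x i * ?N p q l r a b + A x p * ?N i q l r a b + A x q * ?N p i l r a b
     + A x r * ?N p q l i a b + A x a * ?N p q l r i b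
     + (\<Sum>e\<in>UNIV. ?\<Gamma> e i p * ?N e q l r a b) + (\<Sum>e\<in>UNIV. ?\<Gamma> e i q * ?N p e l r a b)
     + (\<Sum>e\<in>UNIV. ?\<Gamma> e i r * ?N p q l e a b) + (\<Sum>e\<in>UNIV. ?\<Gamma> e i a * ?N p q l r e b)" for l b
  have "pd i (\<lambda>z. weyl_contr2 z p q r a) x = (\<Sum>l\<in>UNIV. \<Sum>b\<in>UNIV. ginv g x l b * K l b)"
    unfolding weyl_contr2_def
  proof (rule pd_contract_A_null[OF x, where Y = "\<lambda>b. ?N p q i r a b" and Z = "\<lambda>l. ?N p q l r a i"])
    fix l b
    show "(\<lambda>z. weyl_contr1 z p q l r a b) differentiable (at x)"
      by (rule smooth_differentiable[OF weyl_contr1_smooth x])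
    show "pd i (\<lambda>z. weyl_contr1 z p q l r a b) x = K l b + A x l * ?N p q i r a b + A x b * ?N p q l r a i
       + (\<Sum>e\<in>UNIV. ?\<Gamma> e i l * ?N p q e r a b) + (\<Sum>e\<in>UNIV. ?\<Gamma> e i b * ?N p q l r a e)"
      unfolding pd_weyl_contr1[OF x] K_def by (simp add: algebra_simps)
  qed (use A_up_contr1_zero[OF x] in simp_all)
  also have "\<dots> = ?rhs"
    unfolding K_def distrib_left sum.distrib contract_cmult contract_sum_commute weyl_contr2_def ..
  finally show ?thesis .
qed

lemma pd_weyl_sq:
  assumes x: "x \<in> U"
  shows "pd i (\<lambda>z. weyl_sq g z p r) x =
    4 * A x i * weyl_sq g x p r + A x p * weyl_sq g x i r + A x r * weyl_sq g x p i
    + (\<Sum>e\<in>UNIV. christoffel g x e i p * weyl_sq g x e r)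
    + (\<Sum>e\<in>UNIV. christoffel g x e i r * weyl_sq g x p e)"
    (is "_ = ?rhs")
proof -
  let ?M = "weyl_contr2 x" and ?\<Gamma> = "christoffel g x"
  define K where "K q a = 4 * A x i * ?M p q r a + A x p * ?M i q r a + A x r * ?M p q i a
     + (\<Sum>e\<in>UNIV. ?\<Gamma> e i p * ?M e q r a) + (\<Sum>e\<in>UNIV. ?\<Gamma> e i r * ?M p q e a)" for q a
  have "pd i (\<lambda>z. weyl_sq g z p r) x = (\<Sum>q\<in>UNIV. \<Sum>a\<in>UNIV. ginv g x q a * K q a)"
    unfolding weyl_sq_eq_contr2
  proof (rule pd_contract_A_null[OF x, where Y = "\<lambda>a. ?M p i r a" and Z = "\<lambda>q. ?M p q r i"])
    fix q a
    show "(\<lambda>z. weyl_contr2 z p q r a) differentiable (at x)"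
      by (rule smooth_differentiable[OF weyl_contr2_smooth x])
    show "pd i (\<lambda>z. weyl_contr2 z p q r a) x = K q a + A x q * ?M p i r a + A x a * ?M p q r i
       + (\<Sum>e\<in>UNIV. ?\<Gamma> e i q * ?M p e r a) + (\<Sum>e\<in>UNIV. ?\<Gamma> e i a * ?M p q r e)"
      unfolding pd_weyl_contr2[OF x] K_def by (simp add: algebra_simps)
  qed (use A_up_contr2_zero[OF x] in simp_all)
  also have "\<dots> = ?rhs"
    unfolding K_def distrib_left sum.distrib contract_cmult contract_sum_commute weyl_sq_eq_contr2 ..
  finally show ?thesis .
qed

lemma pd_weyl_sq_trace:
  assumes x: "x \<in> U"
  shows "pd i (\<lambda>z. weyl_sq_trace g z) x = 4 * A x i * weyl_sq_trace g x"
proof -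
  have "pd i (\<lambda>z. weyl_sq_trace g z) x
      = (\<Sum>p\<in>UNIV. \<Sum>q\<in>UNIV. ginv g x p q * (4 * A x i * weyl_sq g x p q))"
    unfolding weyl_sq_trace_def
  proof (rule pd_contract_A_null[OF x, where Y = "\<lambda>q. weyl_sq g x i q" and Z = "\<lambda>p. weyl_sq g x p i"])
    fix p q
    show "(\<lambda>z. weyl_sq g z p q) differentiable (at x)"
      by (rule smooth_differentiable[OF weyl_sq_smooth x])
  qed (simp add: pd_weyl_sq[OF x] algebra_simps, (simp add: A_up_weyl_sq_zero[OF x])+)
  thus ?thesis unfolding contract_cmult weyl_sq_trace_def .
qed

end

section \<open>The Codazzi tensor\<close>

lemma abs_powr_eq_square_powr: "\<bar>y::real\<bar> powr a = (y\<^sup>2) powr (a / 2)"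
proof (cases "y = 0")
  case False
  hence "y\<^sup>2 = \<bar>y\<bar> powr 2" by (simp add: powr_realpow[symmetric])
  hence "(y\<^sup>2) powr (a / 2) = (\<bar>y\<bar> powr 2) powr (a / 2)" by simp
  also have "\<dots> = \<bar>y\<bar> powr a" by (simp only: powr_powr) simp
  finally show ?thesis ..
qed simp

context cqr_chart
begin

lemma weight_has_real_derivative:
  assumes x: "x \<in> U" and nz: "weyl_sq_trace g x \<noteq> 0"
  shows "((\<lambda>t. \<bar>weyl_sq_trace g (x + t *\<^sub>R axis i 1)\<bar> powr (-3/4)) has_real_derivative
           -3 * A x i * \<bar>weyl_sq_trace g x\<bar> powr (-3/4)) (at 0)"
proof -
  \<comment> \<open>\<open>DERIV_powr\<close> needs a positive base, hence the detour through the square\<close>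
  define w where "w t = weyl_sq_trace g (x + t *\<^sub>R axis i 1)" for t
  have w0: "w 0 = weyl_sq_trace g x" by (simp add: w_def)
  have "(w has_real_derivative pd i (\<lambda>z. weyl_sq_trace g z) x) (at 0)"
    unfolding w_def by (rule pd_has_real_derivative[OF smooth_differentiable[OF weyl_sq_trace_smooth x]])
  hence dw: "(w has_real_derivative 4 * A x i * w 0) (at 0)"
    by (simp add: pd_weyl_sq_trace[OF x] w0)
  have dsq: "((\<lambda>t. (w t)\<^sup>2) has_real_derivative 2 * w 0 * (4 * A x i * w 0)) (at 0)"
    using DERIV_mult[OF dw dw] by (simp add: power2_eq_square algebra_simps)
  have "(w 0)\<^sup>2 > 0" using nz w0 by simp
  from DERIV_powr[OF dsq this DERIV_const[of "-3/8"]]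
  have "((\<lambda>t. ((w t)\<^sup>2) powr (-3/8)) has_real_derivative
      ((w 0)\<^sup>2) powr (-3/8) * (2 * w 0 * (4 * A x i * w 0) * (-3/8) / (w 0)\<^sup>2)) (at 0)"
    by simp
  moreover have "((w 0)\<^sup>2) powr (-3/8) * (2 * w 0 * (4 * A x i * w 0) * (-3/8) / (w 0)\<^sup>2)
      = -3 * A x i * \<bar>weyl_sq_trace g x\<bar> powr (-3/4)"
    using nz unfolding w0 abs_powr_eq_square_powr by (simp add: power2_eq_square field_simps)
  ultimately show ?thesis unfolding w_def abs_powr_eq_square_powr by simp
qed

lemma cov2_weighted_weyl_sq:
  assumes x: "x \<in> U" and nz: "weyl_sq_trace g x \<noteq> 0"
  shows "cov2 g (\<lambda>y p r. \<bar>weyl_sq_trace g y\<bar> powr (-3/4) * weyl_sq g y p r) x i j q =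
    \<bar>weyl_sq_trace g x\<bar> powr (-3/4) * (A x i * weyl_sq g x j q + A x j * weyl_sq g x i q + A x q * weyl_sq g x j i)"
proof -
  have "(\<lambda>z. weyl_sq g z j q) differentiable (at x)"
    by (rule smooth_differentiable[OF weyl_sq_smooth x])
  from pd_mult_along_axis[OF weight_has_real_derivative[OF x nz] this]
  show ?thesis
    unfolding cov2_def pd_weyl_sq[OF x] by (simp add: algebra_simps sum.distrib sum_distrib_left)
qed

lemma weighted_weyl_sq_codazzi:
  assumes "x \<in> U" "weyl_sq_trace g x \<noteq> 0"
  shows "cov2 g (\<lambda>y p r. \<bar>weyl_sq_trace g y\<bar> powr (-3/4) * weyl_sq g y p r) x i j q =
         cov2 g (\<lambda>y p r. \<bar>weyl_sq_trace g y\<bar> powr (-3/4) * weyl_sq g y p r) x j i q"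
  unfolding cov2_weighted_weyl_sq[OF assms] using weyl_sq_sym[OF assms(1), of j i]
  by (simp add: algebra_simps)

end

theorem mainTheorem4:
  fixes U :: "(real^'n::finite) set"
    and g :: "real^'n \<Rightarrow> 'n \<Rightarrow> 'n \<Rightarrow> real"
    and A :: "real^'n \<Rightarrow> 'n \<Rightarrow> real"
  assumes "CARD('n) \<ge> 3"
    and "pseudo_riemannian_chart U g"
    and "CQR U g A"
    and "\<forall>x\<in>U. weyl_sq_trace g x \<noteq> 0"
  shows "\<forall>x\<in>U. \<forall>i j q.
           cov2 g (\<lambda>y p r. \<bar>weyl_sq_trace g y\<bar> powr (-3/4) * weyl_sq g y p r) x i j q =
           cov2 g (\<lambda>y p r. \<bar>weyl_sq_trace g y\<bar> powr (-3/4) * weyl_sq g y p r) x j i q"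
proof -
  interpret cqr_chart U g A
    using assms(1-3) by unfold_locales (auto simp: CQR_def)
  show ?thesis using weighted_weyl_sq_codazzi assms(4) by blast
qed

end
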